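(* Let $p\neq 0$ and $\sigma^2\in\{1,-1\}$, let $\sigma$ denote a square root of $\sigma^2$, and fix a choice of sign. Consider the 2D generalized Boussinesq potential equation $$v_{tt}-v_{xx}-(v_x^{p+1})_x\mp v_{xxxx}-\sigma^2 v_{yy}=0$$ for $v(x,y,t)$. (i) For arbitrary $p\neq 0$, the infinitesimal point symmetries of this equation are spanned by the following generators $\mathrm{X}=\xi^x\partial_x+\xi^y\partial_y+\tau\partial_t+\eta\partial_v$: 1. $\tau=0,\ \xi^x=1,\ \xi^y=0,\ \eta=0$; 2. $\tau=0,\ \xi^x=0,\ \xi^y=1,\ \eta=0$; 3. $\tau=1,\ \xi^x=0,\ \xi^y=0,\ \eta=0$; 4. $\tau=y,\ \xi^x=0,\ \xi^y=\sigma^2 t,\ \eta=0$; 5. $\tau=0,\ \xi^x=0,\ \xi^y=0,\ \eta=f_1(y+\sigma t)+f_2(y-\sigma t)$, where $f_1,f_2$ are arbitrary functions of one variable (this corresponds to the general solution $P(y,t)$ of $P_{tt}-\sigma^2P_{yy}=0$). Generators 1–3 are translations, and 4 is a boost in the $(y,t)$-plane. (ii) Additional point symmetries are admitted only when $p=1$. They are given by the scaling combined with a shift in $v$ $$\tau=2t,\qquad \xi^x=x,\qquad \xi^y=2y,\qquad \eta=-(v+x).$$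
   Context: An infinitesimal point symmetry of a PDE for $v(x,y,t)$ is a vector field $\mathrm{X}=\xi^x(x,y,t,v)\partial_x+\xi^y(x,y,t,v)\partial_y+\tau(x,y,t,v)\partial_t+\eta(x,y,t,v)\partial_v$ whose prolongation leaves the equation invariant. Its characteristic is $P=\eta-\xi^x v_x-\xi^y v_y-\tau v_t$. The sign $\mp$ in the equation is fixed but arbitrary; it is the opposite of the sign $\pm$ multiplying $u_{xxxx}$ in the original equation $u_{tt}=u_{xx}+(u^{p+1})_{xx}\pm u_{xxxx}+\sigma^2u_{yy}$, where $u=v_x$. *)

theory Defs
  imports "HOL-Analysis.Analysis"
begin

type_synonym R3 = "real \<times> real \<times> real"            (* (x, y, t) *)
type_synonym R4 = "real \<times> real \<times> real \<times> real"   (* (x, y, t, v) *)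

definition pdir :: "'a::real_normed_vector \<Rightarrow> ('a \<Rightarrow> real) \<Rightarrow> 'a \<Rightarrow> real" where
  "pdir b f z = deriv (\<lambda>s. f (z + s *\<^sub>R b)) 0"

definition Dlist :: "'a::real_normed_vector list \<Rightarrow> ('a \<Rightarrow> real) \<Rightarrow> 'a \<Rightarrow> real" where
  "Dlist bs f = foldr pdir bs f"

definition smoothC :: "('a::euclidean_space \<Rightarrow> real) \<Rightarrow> bool" where
  "smoothC f \<longleftrightarrow> (\<forall>bs. set bs \<subseteq> Basis \<longrightarrow> (\<forall>z. Dlist bs f differentiable (at z)))"

definition ex :: R3 where "ex = (1, 0, 0)"
definition ey :: R3 where "ey = (0, 1, 0)"
definition et :: R3 where "et = (0, 0, 1)"

text \<open>A point vector field X = xi^x d_x + xi^y d_y + tau d_t + eta d_v,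
  stored as the tuple (xi^x, xi^y, tau, eta) of functions of (x,y,t,v).\<close>
type_synonym vf = "(R4 \<Rightarrow> real) \<times> (R4 \<Rightarrow> real) \<times> (R4 \<Rightarrow> real) \<times> (R4 \<Rightarrow> real)"

definition xiX :: "vf \<Rightarrow> R4 \<Rightarrow> real" where "xiX X = fst X"
definition xiY :: "vf \<Rightarrow> R4 \<Rightarrow> real" where "xiY X = fst (snd X)"
definition tauT :: "vf \<Rightarrow> R4 \<Rightarrow> real" where "tauT X = fst (snd (snd X))"
definition etaV :: "vf \<Rightarrow> R4 \<Rightarrow> real" where "etaV X = snd (snd (snd X))"

definition smooth_vf :: "vf \<Rightarrow> bool" where
  "smooth_vf X \<longleftrightarrow> smoothC (xiX X) \<and> smoothC (xiY X) \<and> smoothC (tauT X) \<and> smoothC (etaV X)"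

definition vadd :: "vf \<Rightarrow> vf \<Rightarrow> vf" where
  "vadd X Y = ((\<lambda>w. xiX X w + xiX Y w), (\<lambda>w. xiY X w + xiY Y w),
               (\<lambda>w. tauT X w + tauT Y w), (\<lambda>w. etaV X w + etaV Y w))"

definition vscale :: "real \<Rightarrow> vf \<Rightarrow> vf" where
  "vscale c X = ((\<lambda>w. c * xiX X w), (\<lambda>w. c * xiY X w), (\<lambda>w. c * tauT X w), (\<lambda>w. c * etaV X w))"

definition graphpt :: "(R3 \<Rightarrow> real) \<Rightarrow> R3 \<Rightarrow> R4" where
  "graphpt u z = (fst z, fst (snd z), snd (snd z), u z)"

definition charQ :: "vf \<Rightarrow> (R3 \<Rightarrow> real) \<Rightarrow> R3 \<Rightarrow> real" where
  "charQ X u z = etaV X (graphpt u z) - xiX X (graphpt u z) * pdir ex u z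
                 - xiY X (graphpt u z) * pdir ey u z - tauT X (graphpt u z) * pdir et u z"

definition etaJ :: "vf \<Rightarrow> (R3 \<Rightarrow> real) \<Rightarrow> R3 list \<Rightarrow> R3 \<Rightarrow> real" where
  "etaJ X u J z = Dlist J (charQ X u) z
      + xiX X (graphpt u z) * Dlist (J @ [ex]) u z
      + xiY X (graphpt u z) * Dlist (J @ [ey]) u z
      + tauT X (graphpt u z) * Dlist (J @ [et]) u z"

text \<open>The equation v_tt - v_xx - (v_x^(p+1))_x - e v_xxxx - sigma^2 v_yy = 0
  (e in {1,-1} encodes the sign -+), with (v_x^(p+1))_x = (p+1) v_x^p v_xx.\<close>
definition Delta :: "real \<Rightarrow> real \<Rightarrow> real \<Rightarrow> (R3 \<Rightarrow> real) \<Rightarrow> R3 \<Rightarrow> real" where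
  "Delta p s2 e u z =
     Dlist [et, et] u z - Dlist [ex, ex] u z
     - (p + 1) * (Dlist [ex] u z powr p) * Dlist [ex, ex] u z
     - e * Dlist [ex, ex, ex, ex] u z - s2 * Dlist [ey, ey] u z"

definition prDelta :: "real \<Rightarrow> real \<Rightarrow> real \<Rightarrow> vf \<Rightarrow> (R3 \<Rightarrow> real) \<Rightarrow> R3 \<Rightarrow> real" where
  "prDelta p s2 e X u z =
     etaJ X u [et, et] z - etaJ X u [ex, ex] z
     - (p + 1) * (Dlist [ex] u z powr p) * etaJ X u [ex, ex] z
     - (p + 1) * p * (Dlist [ex] u z powr (p - 1)) * Dlist [ex, ex] u z * etaJ X u [ex] z
     - e * etaJ X u [ex, ex, ex, ex] z - s2 * etaJ X u [ey, ey] z"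

text \<open>Infinitesimal invariance criterion: pr X Delta = 0 whenever Delta = 0, on jet space
  (domain v_x > 0, where v_x^p is defined for real p). Every 4-jet is the jet of a
  smooth (polynomial) function u at a point, so we quantify over u and points z.\<close>
definition is_point_symmetry :: "real \<Rightarrow> real \<Rightarrow> real \<Rightarrow> vf \<Rightarrow> bool" where
  "is_point_symmetry p s2 e X \<longleftrightarrow>
     (\<forall>u z. smoothC u \<longrightarrow> Dlist [ex] u z > 0 \<longrightarrow> Delta p s2 e u z = 0 \<longrightarrow> prDelta p s2 e X u z = 0)"

definition gen1 :: vf where "gen1 = ((\<lambda>_. 1), (\<lambda>_. 0), (\<lambda>_. 0), (\<lambda>_. 0))"
definition gen2 :: vf where "gen2 = ((\<lambda>_. 0), (\<lambda>_. 1), (\<lambda>_. 0), (\<lambda>_. 0))"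
definition gen3 :: vf where "gen3 = ((\<lambda>_. 0), (\<lambda>_. 0), (\<lambda>_. 1), (\<lambda>_. 0))"
definition gen4 :: "real \<Rightarrow> vf" where
  "gen4 s2 = ((\<lambda>_. 0), (\<lambda>(x,y,t,v). s2 * t), (\<lambda>(x,y,t,v). y), (\<lambda>_. 0))"
definition gen5 :: "(real \<times> real \<Rightarrow> real) \<Rightarrow> vf" where
  "gen5 P = ((\<lambda>_. 0), (\<lambda>_. 0), (\<lambda>_. 0), (\<lambda>(x,y,t,v). P (y, t)))"
definition gen_scal :: vf where
  "gen_scal = ((\<lambda>(x,y,t,v). x), (\<lambda>(x,y,t,v). 2 * y), (\<lambda>(x,y,t,v). 2 * t), (\<lambda>(x,y,t,v). - (v + x)))"

definition wave_sol :: "real \<Rightarrow> (real \<times> real \<Rightarrow> real) \<Rightarrow> bool" where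
  "wave_sol s2 P \<longleftrightarrow> smoothC P \<and>
     (\<forall>z. Dlist [(0,1), (0,1)] P z - s2 * Dlist [(1,0), (1,0)] P z = 0)"

end

theory Submission
  imports Defs
begin

text \<open>
  A point symmetry must satisfy the prolonged invariance condition at every jet of a solution.
  Evaluating that condition on explicit polynomial solutions whose jets at a point are free parameters
  turns it into polynomial identities in these parameters; their coefficients are the determining
  equations. A first family of probes, with vanishing pure second derivatives, shows that \<open>\<xi>\<^sup>x\<close>
  does not depend on \<open>y, t, v\<close>, that \<open>\<xi>\<^sup>y, \<tau>\<close> do not depend on \<open>x, v\<close>, and that \<open>\<eta>\<close> is affine
  in \<open>v\<close>. For such reduced fields a second family of probes gives \<open>\<tau>\<^sub>t = \<xi>\<^sup>y\<^sub>y = 2 \<xi>\<^sup>x\<^sub>x\<close>,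
  \<open>\<xi>\<^sup>x\<^sub>x\<^sub>x = 0\<close> and an identity \<open>c\<^sub>0 + c\<^sub>1 v\<^sub>x\<^sup>p\<^sup>-\<^sup>1 + c\<^sub>2 v\<^sub>x\<^sup>p = 0\<close> in the free value \<open>v\<^sub>x > 0\<close>.
  For \<open>p \<noteq> 1\<close> the three powers are independent, which rules out the scaling; for \<open>p = 1\<close> two of
  them coincide and the scaling with \<open>\<eta> = -(v + x)\<close> survives. Integrating, all coefficients are
  affine, except for the part \<open>P(y, t)\<close> of \<open>\<eta>\<close>, which must solve the wave equation.
  Conversely, on solutions the prolonged equation of a combination of the generators reduces to a
  multiple of the scaling coefficient that vanishes for \<open>p = 1\<close>.
\<close>

section \<open>Directional derivatives\<close>

definition slice :: "'a::real_normed_vector \<Rightarrow> ('a \<Rightarrow> real) \<Rightarrow> 'a \<Rightarrow> real \<Rightarrow> real" where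
  "slice d f z = (\<lambda>s. f (z + s *\<^sub>R d))"

lemma slice_0 [simp]: "slice d f z 0 = f z"
  by (simp add: slice_def)

lemma Dlist_Nil [simp]: "Dlist [] f = f"
  by (simp add: Dlist_def)

lemma Dlist_Cons [simp]: "Dlist (b # bs) f = pdir b (Dlist bs f)"
  by (simp add: Dlist_def)

lemma Dlist_append: "Dlist (xs @ ys) f = Dlist xs (Dlist ys f)"
  by (simp add: Dlist_def)

lemma deriv_shift: "deriv g s = deriv (\<lambda>r. g (s + r)) 0"
proof -
  have "DERIV g s :> D \<longleftrightarrow> DERIV (\<lambda>r. g (s + r)) 0 :> D" for D
    using DERIV_shift[of g D 0 s] by (simp add: add.commute)
  then show ?thesis
    unfolding deriv_def by simp
qed

lemma pdir_slice: "pdir d f (z + s *\<^sub>R d) = deriv (slice d f z) s"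
proof -
  have "deriv (slice d f z) s = deriv (\<lambda>r. slice d f z (s + r)) 0"
    by (rule deriv_shift)
  also have "(\<lambda>r. slice d f z (s + r)) = (\<lambda>r. f (z + s *\<^sub>R d + r *\<^sub>R d))"
    by (simp add: slice_def scaleR_add_left add.assoc)
  finally show ?thesis
    by (simp add: pdir_def)
qed

lemma slice_Dlist_replicate: "slice d (Dlist (replicate k d) f) z = (deriv ^^ k) (slice d f z)"
proof (induction k)
  case (Suc k)
  have "slice d (Dlist (replicate (Suc k) d) f) z = (\<lambda>s. pdir d (Dlist (replicate k d) f) (z + s *\<^sub>R d))"
    by (simp add: slice_def)
  also have "\<dots> = deriv (slice d (Dlist (replicate k d) f) z)"
    by (simp only: pdir_slice)
  finally show ?case
    using Suc by simp
qed (simp add: slice_def)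

lemma pdir_has_derivative:
  assumes "(h has_derivative h') (at z)"
  shows "pdir d h z = h' d"
proof -
  have "((\<lambda>s. z + s *\<^sub>R d) has_derivative (\<lambda>s. s *\<^sub>R d)) (at 0)"
    by (auto intro!: derivative_eq_intros)
  then have "((\<lambda>s. h (z + s *\<^sub>R d)) has_derivative (\<lambda>s. h' (s *\<^sub>R d))) (at 0)"
    using has_derivative_compose[of "\<lambda>s. z + s *\<^sub>R d" _ 0 UNIV h h'] assms by simp
  moreover have "(\<lambda>s. h' (s *\<^sub>R d)) = (*) (h' d)"
    using assms has_derivative_linear by (force simp: linear_scale mult.commute)
  ultimately have "DERIV (\<lambda>s. h (z + s *\<^sub>R d)) 0 :> h' d"
    by (simp add: has_field_derivative_def)
  then show ?thesis
    unfolding pdir_def by (rule DERIV_imp_deriv)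
qed

lemma pdir_frechet_derivative:
  assumes "h differentiable (at z)"
  shows "pdir d h z = frechet_derivative h (at z) d"
  using assms pdir_has_derivative frechet_derivative_works by blast

lemma linear_frechet_derivative:
  "h differentiable (at z) \<Longrightarrow> linear (frechet_derivative h (at z))"
  using frechet_derivative_works has_derivative_linear by blast

lemma pdir_linear_direction:
  assumes "h differentiable (at z)"
  shows "pdir (d1 + c *\<^sub>R d2) h z = pdir d1 h z + c * pdir d2 h z"
  using assms linear_frechet_derivative[OF assms]
  by (simp add: pdir_frechet_derivative linear_add linear_scale)

lemma pdir_Basis_expansion:
  fixes h :: "'a::euclidean_space \<Rightarrow> real"
  assumes "h differentiable (at z)"
  shows "pdir d h z = (\<Sum>b\<in>Basis. (d \<bullet> b) * pdir b h z)"
proof -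
  let ?h' = "frechet_derivative h (at z)"
  have "?h' d = ?h' (\<Sum>b\<in>Basis. (d \<bullet> b) *\<^sub>R b)"
    by (simp add: euclidean_representation)
  also have "\<dots> = (\<Sum>b\<in>Basis. (d \<bullet> b) * ?h' b)"
    using linear_frechet_derivative[OF assms] by (simp add: linear_sum linear_scale)
  finally show ?thesis
    using assms by (simp add: pdir_frechet_derivative)
qed

lemma pdir_add:
  assumes "f differentiable (at z)" "g differentiable (at z)"
  shows "pdir d (\<lambda>w. f w + g w) z = pdir d f z + pdir d g z"
proof -
  obtain f' g' where "(f has_derivative f') (at z)" "(g has_derivative g') (at z)"
    using assms by (auto simp: differentiable_def)
  then show ?thesis
    using has_derivative_add pdir_has_derivative by metis
qed

lemma pdir_cmult:
  assumes "f differentiable (at z)"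
  shows "pdir d (\<lambda>w. c * f w) z = c * pdir d f z"
proof -
  obtain f' where "(f has_derivative f') (at z)"
    using assms by (auto simp: differentiable_def)
  then show ?thesis
    using has_derivative_mult_right pdir_has_derivative by metis
qed

lemma pdir_mult:
  assumes "f differentiable (at z)" "g differentiable (at z)"
  shows "pdir d (\<lambda>w. f w * g w) z = pdir d f z * g z + f z * pdir d g z"
proof -
  obtain f' g' where fg: "(f has_derivative f') (at z)" "(g has_derivative g') (at z)"
    using assms by (auto simp: differentiable_def)
  then have "pdir d (\<lambda>w. f w * g w) z = f z * g' d + f' d * g z"
    using has_derivative_mult pdir_has_derivative by blast
  then show ?thesis
    using pdir_has_derivative[OF fg(1)] pdir_has_derivative[OF fg(2)] by (simp add: mult.commute)
qed

lemma pdir_const [simp]: "pdir d (\<lambda>w. c) = (\<lambda>w. 0)"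
  unfolding pdir_def by (intro ext DERIV_imp_deriv) simp

lemma pdir_compose_linear:
  assumes "linear T"
  shows "pdir d (\<lambda>z. F (T z)) z = pdir (T d) F (T z)"
  using assms by (simp add: pdir_def linear_add linear_scale)

lemma Dlist_compose_linear:
  assumes T: "linear T"
  shows "Dlist ds (\<lambda>z. F (T z)) = (\<lambda>z. Dlist (map T ds) F (T z))"
proof (induction ds)
  case (Cons d ds)
  then have "Dlist (d # ds) (\<lambda>z. F (T z)) = pdir d (\<lambda>z. Dlist (map T ds) F (T z))"
    by simp
  then show ?case
    by (simp add: fun_eq_iff pdir_compose_linear[OF T])
qed simp


section \<open>Smoothness in every direction\<close>

definition smooth_dirs :: "('a::real_normed_vector \<Rightarrow> real) \<Rightarrow> bool" where
  "smooth_dirs f \<longleftrightarrow> (\<forall>ds z. Dlist ds f differentiable (at z))"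

inductive_set partials_span :: "('a::euclidean_space \<Rightarrow> real) \<Rightarrow> ('a \<Rightarrow> real) set" for f where
  partials_span_Dlist: "set bs \<subseteq> Basis \<Longrightarrow> Dlist bs f \<in> partials_span f"
| partials_span_zero: "(\<lambda>z. 0) \<in> partials_span f"
| partials_span_add: "g \<in> partials_span f \<Longrightarrow> h \<in> partials_span f \<Longrightarrow> (\<lambda>z. g z + h z) \<in> partials_span f"
| partials_span_cmult: "g \<in> partials_span f \<Longrightarrow> (\<lambda>z. c * g z) \<in> partials_span f"

lemma partials_span_differentiable:
  assumes "smoothC f" "g \<in> partials_span f"
  shows "g differentiable (at z)"
  using assms(2,1)
  by (induction g arbitrary: z rule: partials_span.induct) (auto simp: smoothC_def)

lemma partials_span_sum:
  "finite S \<Longrightarrow> (\<And>b. b \<in> S \<Longrightarrow> g b \<in> partials_span f) \<Longrightarrow> (\<lambda>z. \<Sum>b\<in>S. g b z) \<in> partials_span f"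
  by (induction S rule: finite_induct) (simp_all add: partials_span_zero partials_span_add)

lemma partials_span_pdir:
  assumes "smoothC f" "g \<in> partials_span f"
  shows "pdir d g \<in> partials_span f"
  using assms(2,1)
proof (induction g rule: partials_span.induct)
  case (partials_span_Dlist bs)
  then have "pdir d (Dlist bs f) = (\<lambda>z. \<Sum>b\<in>Basis. (d \<bullet> b) * Dlist (b # bs) f z)"
    by (auto simp: smoothC_def pdir_Basis_expansion)
  moreover have "(\<lambda>z. \<Sum>b\<in>Basis. (d \<bullet> b) * Dlist (b # bs) f z) \<in> partials_span f"
    using partials_span_Dlist
    by (intro partials_span_sum partials_span_cmult) (auto intro!: partials_span.partials_span_Dlist[of "_ # bs", simplified])
  ultimately show ?case
    by simp
next
  case (partials_span_add g h)
  then have "pdir d (\<lambda>z. g z + h z) = (\<lambda>z. pdir d g z + pdir d h z)"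
    by (simp add: pdir_add partials_span_differentiable fun_eq_iff)
  then show ?case
    using partials_span_add by (simp add: partials_span.partials_span_add)
next
  case (partials_span_cmult g c)
  then have "pdir d (\<lambda>z. c * g z) = (\<lambda>z. c * pdir d g z)"
    by (simp add: pdir_cmult partials_span_differentiable fun_eq_iff)
  then show ?case
    using partials_span_cmult by (simp add: partials_span.partials_span_cmult)
qed (simp add: partials_span.partials_span_zero)

text \<open>\<^const>\<open>smoothC\<close> only asks for derivatives along basis vectors; by linearity of the
  Frechet derivative this already controls all directions.\<close>

lemma smooth_dirs_iff_smoothC: "smooth_dirs f \<longleftrightarrow> smoothC f"
proof
  assume f: "smoothC f"
  have "Dlist ds f \<in> partials_span f" for ds
    by (induction ds) (use f partials_span_Dlist[of "[]" f] partials_span_pdir in auto)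
  then show "smooth_dirs f"
    unfolding smooth_dirs_def using f partials_span_differentiable by blast
qed (auto simp: smooth_dirs_def smoothC_def)

lemma smooth_dirs_differentiable: "smooth_dirs f \<Longrightarrow> f differentiable (at z)"
  unfolding smooth_dirs_def using Dlist_Nil by metis

lemma smooth_dirs_Dlist: "smooth_dirs f \<Longrightarrow> smooth_dirs (Dlist ds f)"
  unfolding smooth_dirs_def by (metis Dlist_append)

lemma smooth_dirs_pdir: "smooth_dirs f \<Longrightarrow> smooth_dirs (pdir d f)"
  using smooth_dirs_Dlist[of f "[d]"] by simp

lemma smooth_dirs_pdir_differentiable: "smooth_dirs f \<Longrightarrow> pdir d f differentiable (at z)"
  by (rule smooth_dirs_differentiable[OF smooth_dirs_pdir])

lemma smooth_dirs_add:
  assumes f: "smooth_dirs f" and g: "smooth_dirs g"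
  shows "smooth_dirs (\<lambda>z. f z + g z)"
proof -
  have "Dlist ds (\<lambda>z. f z + g z) = (\<lambda>z. Dlist ds f z + Dlist ds g z)" for ds
  proof (induction ds)
    case (Cons d ds)
    then have "Dlist (d # ds) (\<lambda>z. f z + g z) = pdir d (\<lambda>z. Dlist ds f z + Dlist ds g z)"
      by simp
    then show ?case
      using f g by (simp add: smooth_dirs_def pdir_add fun_eq_iff)
  qed simp
  then show ?thesis
    using f g unfolding smooth_dirs_def by (simp add: differentiable_add)
qed

lemma smooth_dirs_const: "smooth_dirs (\<lambda>z. c)"
proof -
  have const: "Dlist ds (\<lambda>z. c) = (\<lambda>z. if ds = [] then c else 0)" for ds
    by (induction ds) simp_all
  show ?thesis
    unfolding smooth_dirs_def const by simp
qed

lemma smooth_dirs_compose_linear: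
  fixes T :: "'a::euclidean_space \<Rightarrow> 'b::euclidean_space"
  assumes T: "linear T" and F: "smooth_dirs F"
  shows "smooth_dirs (\<lambda>z. F (T z))"
  unfolding smooth_dirs_def
proof (intro allI)
  fix ds z
  have "T differentiable (at z)"
    using T by (simp add: bounded_linear_imp_differentiable linear_conv_bounded_linear)
  then have "(\<lambda>z. Dlist (map T ds) F (T z)) differentiable (at z)"
    using F unfolding smooth_dirs_def by (metis differentiable_compose)
  then show "Dlist ds (\<lambda>z. F (T z)) differentiable (at z)"
    by (simp add: Dlist_compose_linear[OF T])
qed

section \<open>Higher derivatives of functions of one variable\<close>

definition nderiv :: "nat \<Rightarrow> (real \<Rightarrow> real) \<Rightarrow> real \<Rightarrow> real" where
  "nderiv k f = (deriv ^^ k) f"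

definition smooth1 :: "(real \<Rightarrow> real) \<Rightarrow> bool" where
  "smooth1 f \<longleftrightarrow> (\<forall>k x. nderiv k f differentiable (at x))"

lemma nderiv_0 [simp]: "nderiv 0 f = f"
  by (simp add: nderiv_def)

lemma nderiv_Suc: "nderiv (Suc k) f = deriv (nderiv k f)"
  by (simp add: nderiv_def)

lemma smooth1_DERIV: "smooth1 f \<Longrightarrow> DERIV (nderiv k f) x :> nderiv (Suc k) f x"
  by (simp add: smooth1_def nderiv_Suc DERIV_deriv_iff_real_differentiable)

lemma nderiv_add [simp]:
  assumes "smooth1 f" "smooth1 g"
  shows "nderiv n (\<lambda>w. f w + g w) = (\<lambda>x. nderiv n f x + nderiv n g x)"
proof (induction n)
  case (Suc n)
  have "nderiv (Suc n) (\<lambda>w. f w + g w) = deriv (\<lambda>x. nderiv n f x + nderiv n g x)"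
    using Suc by (simp add: nderiv_Suc)
  also have "\<dots> = (\<lambda>x. nderiv (Suc n) f x + nderiv (Suc n) g x)"
    using assms by (intro ext DERIV_imp_deriv DERIV_add smooth1_DERIV)
  finally show ?case .
qed simp

lemma nderiv_cmult [simp]:
  assumes "smooth1 f"
  shows "nderiv n (\<lambda>w. c * f w) = (\<lambda>x. c * nderiv n f x)"
proof (induction n)
  case (Suc n)
  have "nderiv (Suc n) (\<lambda>w. c * f w) = deriv (\<lambda>x. c * nderiv n f x)"
    using Suc by (simp add: nderiv_Suc)
  also have "\<dots> = (\<lambda>x. c * nderiv (Suc n) f x)"
    using assms by (intro ext DERIV_imp_deriv DERIV_cmult smooth1_DERIV)
  finally show ?case .
qed simp

lemma nderiv_const [simp]: "nderiv n (\<lambda>s. c) = (\<lambda>s. if n = 0 then c else 0)"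
  by (induction n) (auto simp: nderiv_Suc intro!: ext DERIV_imp_deriv)

lemma nderiv_mult:
  assumes f: "smooth1 f" and g: "smooth1 g"
  shows "nderiv n (\<lambda>w. f w * g w) = (\<lambda>x. \<Sum>i = 0..n. of_nat (n choose i) * nderiv i f x * nderiv (n - i) g x)"
proof (induction n)
  case (Suc n)
  show ?case
  proof
    fix x
    have df: "DERIV (nderiv k f) x :> nderiv (Suc k) f x" and dg: "DERIV (nderiv k g) x :> nderiv (Suc k) g x" for k
      using f g smooth1_DERIV by auto
    have reindex: "sum h {0..n} = h 0 - h (Suc n) + (\<Sum>i = 0..n. h (Suc i))" for h :: "nat \<Rightarrow> real"
      by (induction n) auto
    have pascal: "Suc n choose k = (n choose k) + (if k = 0 then 0 else n choose (k - 1))" for k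
      by (cases k) simp_all
    have sum_eq: "(\<Sum>i = 0..n. of_nat (n choose i) * (nderiv (Suc i) f x * nderiv (n - i) g x
                     + nderiv (Suc (n - i)) g x * nderiv i f x))
        = g x * nderiv (Suc n) f x + (\<Sum>i = 0..n. nderiv i f x * (of_nat (Suc n choose i) * nderiv (Suc n - i) g x))"
      apply (simp add: pascal algebra_simps sum.distrib)
      apply (subst (4) reindex)
      apply (auto simp: algebra_simps Suc_diff_le intro: sum.cong)
      done
    have "((\<lambda>w. \<Sum>i = 0..n. of_nat (n choose i) * nderiv i f w * nderiv (n - i) g w) has_field_derivative
         (\<Sum>i = 0..Suc n. (Suc n choose i) * nderiv i f x * nderiv (Suc n - i) g x)) (at x)"
      apply (rule derivative_eq_intros | simp)+
      apply (auto intro: DERIV_mult df dg)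
      using sum_eq by (simp add: algebra_simps)
    then show "nderiv (Suc n) (\<lambda>w. f w * g w) x =
        (\<Sum>i = 0..Suc n. of_nat (Suc n choose i) * nderiv i f x * nderiv (Suc n - i) g x)"
      using Suc.IH by (simp add: nderiv_Suc DERIV_imp_deriv)
  qed
qed simp

lemma nderiv_mult_1 [simp]:
  "smooth1 f \<Longrightarrow> smooth1 g \<Longrightarrow> nderiv 1 (\<lambda>w. f w * g w) x = nderiv 1 f x * g x + f x * nderiv 1 g x"
  by (simp add: nderiv_mult)

lemma nderiv_mult_Suc_0 [simp]:
  "smooth1 f \<Longrightarrow> smooth1 g \<Longrightarrow>
     nderiv (Suc 0) (\<lambda>w. f w * g w) x = nderiv (Suc 0) f x * g x + f x * nderiv (Suc 0) g x"
  using nderiv_mult_1 by simp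

lemma nderiv_mult_2 [simp]:
  "smooth1 f \<Longrightarrow> smooth1 g \<Longrightarrow> nderiv 2 (\<lambda>w. f w * g w) x =
     nderiv 2 f x * g x + 2 * nderiv 1 f x * nderiv 1 g x + f x * nderiv 2 g x"
  by (simp add: nderiv_mult numeral_eq_Suc)

lemma nderiv_mult_4 [simp]:
  "smooth1 f \<Longrightarrow> smooth1 g \<Longrightarrow> nderiv 4 (\<lambda>w. f w * g w) x =
     nderiv 4 f x * g x + 4 * nderiv 3 f x * nderiv 1 g x + 6 * nderiv 2 f x * nderiv 2 g x
     + 4 * nderiv 1 f x * nderiv 3 g x + f x * nderiv 4 g x"
  by (simp add: nderiv_mult numeral_eq_Suc)

lemma nderiv_power: "nderiv k (\<lambda>s. s ^ n) = (\<lambda>s. (\<Prod>i<k. real (n - i)) * s ^ (n - k))"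
proof (induction k)
  case (Suc k)
  have D: "DERIV (\<lambda>s. (\<Prod>i<k. real (n - i)) * s ^ (n - k)) s :> (\<Prod>i<Suc k. real (n - i)) * s ^ (n - Suc k)"
    for s :: real
    using DERIV_cmult[OF DERIV_pow[of "n - k" s], of "\<Prod>i<k. real (n - i)"]
    by (simp only: prod.lessThan_Suc diff_diff_left mult.assoc add_Suc_right add_0_right)
  show ?case
    unfolding nderiv_Suc Suc.IH using D by (intro ext DERIV_imp_deriv)
qed simp

lemma nderiv_power_at_0 [simp]: "nderiv k (\<lambda>s. s ^ n) 0 = (if k = n then fact n else 0)"
proof -
  have "(\<Prod>i<n. real (n - i)) = fact n"
    by (simp add: fact_prod_rev atLeast0LessThan)
  moreover have "(\<Prod>i<k. real (n - i)) = 0" if "n < k"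
    using that by (intro prod_zero) auto
  ultimately show ?thesis
    by (auto simp: nderiv_power)
qed

lemma nderiv_ident_at_0 [simp]: "nderiv k (\<lambda>s. s) 0 = (if k = 1 then 1 else 0)"
  using nderiv_power_at_0[of k 1] by simp

lemma smooth1_add [simp]: "smooth1 f \<Longrightarrow> smooth1 g \<Longrightarrow> smooth1 (\<lambda>s. f s + g s)"
  by (simp add: smooth1_def)

lemma smooth1_cmult [simp]: "smooth1 f \<Longrightarrow> smooth1 (\<lambda>s. c * f s)"
  by (simp add: smooth1_def)

lemma smooth1_mult [simp]: "smooth1 f \<Longrightarrow> smooth1 g \<Longrightarrow> smooth1 (\<lambda>s. f s * g s)"
  unfolding smooth1_def nderiv_mult[unfolded smooth1_def]
  by (auto intro!: differentiable_sum differentiable_mult)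

lemma smooth1_mult_const [simp]: "smooth1 f \<Longrightarrow> smooth1 (\<lambda>s. f s * c)"
  using smooth1_cmult[of f c] by (simp add: mult.commute)

lemma smooth1_divide_const [simp]: "smooth1 f \<Longrightarrow> smooth1 (\<lambda>s. f s / c)"
  using smooth1_cmult[of f "1 / c"] by simp

lemma nderiv_mult_const [simp]: "smooth1 f \<Longrightarrow> nderiv n (\<lambda>w. f w * c) = (\<lambda>x. nderiv n f x * c)"
  using nderiv_cmult[of f n c] by (simp add: mult.commute)

lemma nderiv_divide_const [simp]: "smooth1 f \<Longrightarrow> nderiv n (\<lambda>w. f w / c) = (\<lambda>x. nderiv n f x / c)"
  using nderiv_cmult[of f n "1 / c"] by simp

lemma smooth1_const [simp]: "smooth1 (\<lambda>s. c)"
  by (simp add: smooth1_def)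

lemma smooth1_power [simp]: "smooth1 (\<lambda>s. s ^ n)"
  unfolding smooth1_def nderiv_power
  by (intro allI differentiable_mult differentiable_const differentiable_power differentiable_ident)

lemma smooth1_ident [simp]: "smooth1 (\<lambda>s. s)"
  using smooth1_power[of 1] by simp

lemma smooth1_diff [simp]:
  assumes "smooth1 f" "smooth1 g"
  shows "smooth1 (\<lambda>s. f s - g s)"
  using smooth1_add[OF assms(1) smooth1_cmult[OF assms(2), of "-1"]] by simp

lemma nderiv_diff [simp]:
  assumes "smooth1 f" "smooth1 g"
  shows "nderiv n (\<lambda>w. f w - g w) = (\<lambda>x. nderiv n f x - nderiv n g x)"
  using nderiv_add[OF assms(1) smooth1_cmult[OF assms(2), of "-1"], of n]
    nderiv_cmult[OF assms(2), of n "-1"] by simp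

lemma smooth1_slice [simp]:
  assumes "smooth_dirs f"
  shows "smooth1 (slice d f z)"
  unfolding smooth1_def nderiv_def slice_Dlist_replicate[symmetric]
proof (intro allI)
  fix k x
  have "(\<lambda>s. z + s *\<^sub>R d) differentiable (at x)"
    by (intro differentiable_add differentiable_const differentiable_scaleR differentiable_ident)
  then show "slice d (Dlist (replicate k d) f) z differentiable (at x)"
    using assms unfolding smooth_dirs_def slice_def by (metis differentiable_compose)
qed

lemma Dlist_replicate_eq_nderiv: "Dlist (replicate k d) f z = nderiv k (slice d f z) 0"
  using fun_cong[OF slice_Dlist_replicate[of d k f z], of 0] by (simp add: nderiv_def)

lemma Dlist_eq_nderiv_slice:
  "Dlist [d] f z = nderiv 1 (slice d f z) 0"
  "Dlist [d, d] f z = nderiv 2 (slice d f z) 0"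
  "Dlist [d, d, d] f z = nderiv 3 (slice d f z) 0"
  "Dlist [d, d, d, d] f z = nderiv 4 (slice d f z) 0"
  using Dlist_replicate_eq_nderiv[of 1 d f z] Dlist_replicate_eq_nderiv[of 2 d f z]
    Dlist_replicate_eq_nderiv[of 3 d f z] Dlist_replicate_eq_nderiv[of 4 d f z]
  by (simp_all add: numeral_eq_Suc)


section \<open>Polynomial functions\<close>

inductive_set polyfun :: "('a::euclidean_space \<Rightarrow> real) set" where
  polyfun_const: "(\<lambda>z. c) \<in> polyfun"
| polyfun_linear: "linear T \<Longrightarrow> T \<in> polyfun"
| polyfun_add: "f \<in> polyfun \<Longrightarrow> g \<in> polyfun \<Longrightarrow> (\<lambda>z. f z + g z) \<in> polyfun"
| polyfun_mult: "f \<in> polyfun \<Longrightarrow> g \<in> polyfun \<Longrightarrow> (\<lambda>z. f z * g z) \<in> polyfun"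

lemma linear_has_derivative:
  fixes T :: "'a::euclidean_space \<Rightarrow> 'b::euclidean_space"
  shows "linear T \<Longrightarrow> (T has_derivative T) (at z)"
  by (simp add: bounded_linear_imp_has_derivative linear_conv_bounded_linear)

lemma polyfun_differentiable: "f \<in> polyfun \<Longrightarrow> f differentiable (at z)"
proof (induction f arbitrary: z rule: polyfun.induct)
  case (polyfun_linear T)
  then show ?case
    using linear_has_derivative differentiable_def by blast
qed (auto intro: differentiable_add differentiable_mult)

lemma polyfun_pdir: "f \<in> polyfun \<Longrightarrow> pdir d f \<in> polyfun"
proof (induction f rule: polyfun.induct)
  case (polyfun_linear T)
  then have "pdir d T = (\<lambda>z. T d)"
    by (simp add: fun_eq_iff pdir_has_derivative[OF linear_has_derivative])
  then show ?case
    by (simp add: polyfun.polyfun_const)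
next
  case (polyfun_add f g)
  then have "pdir d (\<lambda>z. f z + g z) = (\<lambda>z. pdir d f z + pdir d g z)"
    by (simp add: pdir_add polyfun_differentiable fun_eq_iff)
  then show ?case
    using polyfun_add by (simp add: polyfun.polyfun_add)
next
  case (polyfun_mult f g)
  then have "pdir d (\<lambda>z. f z * g z) = (\<lambda>z. pdir d f z * g z + f z * pdir d g z)"
    by (simp add: pdir_mult polyfun_differentiable fun_eq_iff)
  then show ?case
    using polyfun_mult by (simp add: polyfun.polyfun_add polyfun.polyfun_mult)
qed (simp add: polyfun.polyfun_const)

lemma polyfun_smooth_dirs: "f \<in> polyfun \<Longrightarrow> smooth_dirs f"
proof -
  assume "f \<in> polyfun"
  then have "Dlist ds f \<in> polyfun" for ds
    by (induction ds) (auto simp: polyfun_pdir)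
  then show ?thesis
    unfolding smooth_dirs_def by (auto intro: polyfun_differentiable)
qed

lemma polyfun_diff:
  assumes "f \<in> polyfun" "g \<in> polyfun"
  shows "(\<lambda>z. f z - g z) \<in> polyfun"
proof -
  have "(\<lambda>z. f z + (-1) * g z) \<in> polyfun"
    using assms by (intro polyfun_add polyfun_mult polyfun_const)
  then show ?thesis
    by simp
qed

lemma polyfun_power: "f \<in> polyfun \<Longrightarrow> (\<lambda>z. f z ^ n) \<in> polyfun"
  by (induction n) (auto intro: polyfun_mult polyfun_const)

lemma linear_R3_coordinates:
  "linear (\<lambda>z::R3. fst z)" "linear (\<lambda>z::R3. fst (snd z))" "linear (\<lambda>z::R3. snd (snd z))"
  by (auto intro!: linearI)

lemmas polyfun_R3_intros =
  polyfun_const polyfun_linear[OF linear_R3_coordinates(1)] polyfun_linear[OF linear_R3_coordinates(2)]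
  polyfun_linear[OF linear_R3_coordinates(3)] polyfun_add polyfun_mult polyfun_diff polyfun_power

section \<open>Behaviour along lines\<close>

lemma DERIV_slice:
  assumes "\<And>w. F differentiable (at w)"
  shows "DERIV (slice d F w) s :> pdir d F (w + s *\<^sub>R d)"
proof -
  have "(\<lambda>s. w + s *\<^sub>R d) differentiable (at s)"
    by (intro differentiable_add differentiable_const differentiable_scaleR differentiable_ident)
  then have "slice d F w differentiable (at s)"
    unfolding slice_def using assms by (metis differentiable_compose)
  then show ?thesis
    by (simp add: DERIV_deriv_iff_real_differentiable pdir_slice)
qed

lemma constant_along_direction:
  assumes "\<And>w. F differentiable (at w)" and "\<And>w. pdir d F w = 0"
  shows "F (w + s *\<^sub>R d) = F w"
proof -
  have "DERIV (slice d F w) r :> 0" for r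
    using DERIV_slice[OF assms(1), of d w r] assms(2) by simp
  then have "slice d F w s = slice d F w 0"
    using DERIV_isconst_all by blast
  then show ?thesis
    by (simp add: slice_def)
qed

lemma affine_along_direction:
  assumes "\<And>w. F differentiable (at w)" and "\<And>w. pdir d F differentiable (at w)"
    and "\<And>w. pdir d (pdir d F) w = 0"
  shows "F (w + s *\<^sub>R d) = F w + s * pdir d F w"
proof -
  let ?k = "pdir d F w"
  have "DERIV (slice d F w) r :> ?k" for r
    using DERIV_slice[OF assms(1), of d w r] constant_along_direction[OF assms(2,3), of w r] by simp
  then have "DERIV (\<lambda>r. slice d F w r - r * ?k) r :> 0" for r
    using DERIV_diff[OF _ DERIV_cmult_right[OF DERIV_ident, of ?k]] by fastforce
  then have "slice d F w s - s * ?k = slice d F w 0 - 0 * ?k"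
    using DERIV_isconst_all by blast
  then show ?thesis
    by (simp add: slice_def)
qed

lemma pdir_shift_invariant:
  assumes "\<And>w s. F (w + s *\<^sub>R d) = F w + c s"
  shows "pdir d' F (w + s *\<^sub>R d) = pdir d' F w"
proof -
  have shift: "(\<lambda>r. F (w + s *\<^sub>R d + r *\<^sub>R d')) = (\<lambda>r. F (w + r *\<^sub>R d') + c s)"
    using assms[of "w + r *\<^sub>R d'" s for r] by (simp add: algebra_simps)
  have "DERIV (\<lambda>r. F (w + r *\<^sub>R d') + c s) 0 :> D \<longleftrightarrow> DERIV (\<lambda>r. F (w + r *\<^sub>R d')) 0 :> D" for D
  proof
    assume "DERIV (\<lambda>r. F (w + r *\<^sub>R d') + c s) 0 :> D"
    from DERIV_diff[OF this DERIV_const[where k = "c s"]] show "DERIV (\<lambda>r. F (w + r *\<^sub>R d')) 0 :> D"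
      by simp
  next
    assume "DERIV (\<lambda>r. F (w + r *\<^sub>R d')) 0 :> D"
    from DERIV_add[OF this DERIV_const[where k = "c s"]] show "DERIV (\<lambda>r. F (w + r *\<^sub>R d') + c s) 0 :> D"
      by simp
  qed
  then show ?thesis
    unfolding pdir_def shift deriv_def by simp
qed

lemma pdir_translation_invariant:
  assumes "\<And>w s. F (w + s *\<^sub>R d) = F w"
  shows "pdir d' F (w + s *\<^sub>R d) = pdir d' F w"
  using pdir_shift_invariant[of F d "\<lambda>_. 0"] assms by simp

lemma pdir_eq_0_if_invariant:
  assumes "\<And>w s. F (w + s *\<^sub>R d) = F w"
  shows "pdir d F w = 0"
  using assms by (simp add: pdir_def)

lemma mixed_difference_mvt:
  fixes u :: "'a::real_normed_vector \<Rightarrow> real"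
  assumes du: "\<And>w. u differentiable (at w)" and d1: "\<And>w. pdir d1 u differentiable (at w)"
    and h: "h > 0"
  obtains a b where "0 < a" "a < h" "0 < b" "b < h"
    "u (z + h *\<^sub>R d1 + h *\<^sub>R d2) - u (z + h *\<^sub>R d1) - u (z + h *\<^sub>R d2) + u z
       = h * h * pdir d2 (pdir d1 u) (z + a *\<^sub>R d1 + b *\<^sub>R d2)"
proof -
  define \<phi> where "\<phi> s = u (z + h *\<^sub>R d2 + s *\<^sub>R d1) - u (z + s *\<^sub>R d1)" for s
  have "DERIV \<phi> s :> pdir d1 u (z + h *\<^sub>R d2 + s *\<^sub>R d1) - pdir d1 u (z + s *\<^sub>R d1)" for s
    unfolding \<phi>_def using DERIV_diff[OF DERIV_slice[OF du] DERIV_slice[OF du]] by (simp add: slice_def)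
  then have "\<exists>a. 0 < a \<and> a < h \<and>
      \<phi> h - \<phi> 0 = (h - 0) * (pdir d1 u (z + h *\<^sub>R d2 + a *\<^sub>R d1) - pdir d1 u (z + a *\<^sub>R d1))"
    by (intro MVT2[OF h])
  then obtain a where a: "0 < a" "a < h"
    and eq1: "\<phi> h - \<phi> 0 = h * (pdir d1 u (z + h *\<^sub>R d2 + a *\<^sub>R d1) - pdir d1 u (z + a *\<^sub>R d1))"
    by auto
  define \<psi> where "\<psi> r = pdir d1 u (z + a *\<^sub>R d1 + r *\<^sub>R d2)" for r
  have "DERIV \<psi> r :> pdir d2 (pdir d1 u) (z + a *\<^sub>R d1 + r *\<^sub>R d2)" for r
    unfolding \<psi>_def using DERIV_slice[OF d1] by (simp add: slice_def)
  then have "\<exists>b. 0 < b \<and> b < h \<and> \<psi> h - \<psi> 0 = (h - 0) * pdir d2 (pdir d1 u) (z + a *\<^sub>R d1 + b *\<^sub>R d2)"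
    by (intro MVT2[OF h])
  then obtain b where b: "0 < b" "b < h"
    and eq2: "\<psi> h - \<psi> 0 = h * pdir d2 (pdir d1 u) (z + a *\<^sub>R d1 + b *\<^sub>R d2)"
    by auto
  have "u (z + h *\<^sub>R d1 + h *\<^sub>R d2) - u (z + h *\<^sub>R d1) - u (z + h *\<^sub>R d2) + u z = \<phi> h - \<phi> 0"
    unfolding \<phi>_def by (simp add: algebra_simps)
  also have "\<dots> = h * (\<psi> h - \<psi> 0)"
    using eq1 unfolding \<psi>_def by (simp add: algebra_simps)
  also have "\<dots> = h * h * pdir d2 (pdir d1 u) (z + a *\<^sub>R d1 + b *\<^sub>R d2)"
    using eq2 by simp
  finally show ?thesis
    using a b that by blast
qed

lemma mixed_difference_quotient_LIMSEQ:
  fixes u :: "'a::real_normed_vector \<Rightarrow> real"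
  assumes u: "smooth_dirs u" and h_pos: "\<And>n. h n > 0" and h0: "h \<longlonglongrightarrow> 0"
  shows "(\<lambda>n. (u (z + h n *\<^sub>R d1 + h n *\<^sub>R d2) - u (z + h n *\<^sub>R d1) - u (z + h n *\<^sub>R d2) + u z)
            / (h n * h n)) \<longlonglongrightarrow> pdir d2 (pdir d1 u) z"
proof -
  have "\<forall>n. \<exists>a b. 0 < a \<and> a < h n \<and> 0 < b \<and> b < h n \<and>
      u (z + h n *\<^sub>R d1 + h n *\<^sub>R d2) - u (z + h n *\<^sub>R d1) - u (z + h n *\<^sub>R d2) + u z
        = h n * h n * pdir d2 (pdir d1 u) (z + a *\<^sub>R d1 + b *\<^sub>R d2)"
    using mixed_difference_mvt[OF smooth_dirs_differentiable[OF u] smooth_dirs_pdir_differentiable[OF u]]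
    using h_pos by metis
  then obtain a b where ab: "\<And>n. 0 < a n \<and> a n < h n \<and> 0 < b n \<and> b n < h n \<and>
      u (z + h n *\<^sub>R d1 + h n *\<^sub>R d2) - u (z + h n *\<^sub>R d1) - u (z + h n *\<^sub>R d2) + u z
        = h n * h n * pdir d2 (pdir d1 u) (z + a n *\<^sub>R d1 + b n *\<^sub>R d2)"
    by metis
  have "a \<longlonglongrightarrow> 0" "b \<longlonglongrightarrow> 0"
    using ab by (auto intro!: tendsto_sandwich[OF _ _ tendsto_const h0] always_eventually less_imp_le)
  then have "(\<lambda>n. z + a n *\<^sub>R d1 + b n *\<^sub>R d2) \<longlonglongrightarrow> z + 0 *\<^sub>R d1 + 0 *\<^sub>R d2"
    by (intro tendsto_intros)
  moreover have "isCont (pdir d2 (pdir d1 u)) (z + 0 *\<^sub>R d1 + 0 *\<^sub>R d2)"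
    using u smooth_dirs_pdir smooth_dirs_differentiable differentiable_imp_continuous_within by blast
  ultimately have "(\<lambda>n. pdir d2 (pdir d1 u) (z + a n *\<^sub>R d1 + b n *\<^sub>R d2)) \<longlonglongrightarrow> pdir d2 (pdir d1 u) z"
    using isCont_tendsto_compose by fastforce
  moreover have "h n * h n \<noteq> 0" for n
    using h_pos[of n] by simp
  ultimately show ?thesis
    using ab by simp
qed

lemma pdir_commute:
  fixes u :: "'a::real_normed_vector \<Rightarrow> real"
  assumes "smooth_dirs u"
  shows "pdir d2 (pdir d1 u) z = pdir d1 (pdir d2 u) z"
proof -
  let ?h = "\<lambda>n. 1 / real (Suc n)"
  have h0: "?h \<longlonglongrightarrow> 0"
    using LIMSEQ_inverse_real_of_nat by (simp add: inverse_eq_divide)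
  let ?q = "\<lambda>n. (u (z + ?h n *\<^sub>R d1 + ?h n *\<^sub>R d2) - u (z + ?h n *\<^sub>R d1) - u (z + ?h n *\<^sub>R d2) + u z)
                / (?h n * ?h n)"
  have "?q \<longlonglongrightarrow> pdir d2 (pdir d1 u) z"
    by (rule mixed_difference_quotient_LIMSEQ[OF assms _ h0]) simp
  moreover have "?q \<longlonglongrightarrow> pdir d1 (pdir d2 u) z"
    using mixed_difference_quotient_LIMSEQ[OF assms _ h0, of z d2 d1] by (simp add: algebra_simps)
  ultimately show ?thesis
    using LIMSEQ_unique by blast
qed

lemma pdir_pdir_eq_0: "(\<And>w. pdir d F w = 0) \<Longrightarrow> pdir d' (pdir d F) w = 0"
proof -
  assume "\<And>w. pdir d F w = 0"
  then have "pdir d F = (\<lambda>w. 0)"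
    by auto
  then show ?thesis
    by simp
qed

definition pdirn :: "nat \<Rightarrow> 'a::real_normed_vector \<Rightarrow> ('a \<Rightarrow> real) \<Rightarrow> 'a \<Rightarrow> real" where
  "pdirn k d F w = Dlist (replicate k d) F w"

lemma pdirn_Suc_0 [simp]: "pdirn (Suc 0) d F w = pdir d F w"
  by (simp add: pdirn_def)

lemma pdirn_expand:
  "pdirn 1 d F w = pdir d F w"
  "pdirn 2 d F w = pdir d (pdir d F) w"
  "pdirn 3 d F w = pdir d (pdir d (pdir d F)) w"
  "pdirn 4 d F w = pdir d (pdir d (pdir d (pdir d F))) w"
  by (simp_all add: pdirn_def numeral_eq_Suc)

lemma nderiv_slice_eq_pdirn [simp]: "nderiv k (slice d F w) 0 = pdirn k d F w"
  by (simp add: pdirn_def Dlist_replicate_eq_nderiv)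

lemma pdirn_2_linear_direction:
  assumes F: "smooth_dirs F"
  shows "pdirn 2 (d1 + c *\<^sub>R d2) F w = pdir d1 (pdir d1 F) w + c * (pdir d2 (pdir d1 F) w + pdir d1 (pdir d2 F) w)
           + c\<^sup>2 * pdir d2 (pdir d2 F) w"
proof -
  have d: "F differentiable (at w)" "pdir d1 F differentiable (at w)" "pdir d2 F differentiable (at w)"
    "(\<lambda>w. c * pdir d2 F w) differentiable (at w)" for w
    using smooth_dirs_differentiable[OF F] smooth_dirs_pdir_differentiable[OF F] by simp_all
  have "pdir (d1 + c *\<^sub>R d2) F = (\<lambda>w. pdir d1 F w + c * pdir d2 F w)"
    using d by (simp add: pdir_linear_direction fun_eq_iff)
  then have "pdirn 2 (d1 + c *\<^sub>R d2) F w = pdir (d1 + c *\<^sub>R d2) (\<lambda>w. pdir d1 F w + c * pdir d2 F w) w"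
    by (simp add: pdirn_expand)
  also have "\<dots> = pdir d1 (\<lambda>w. pdir d1 F w + c * pdir d2 F w) w + c * pdir d2 (\<lambda>w. pdir d1 F w + c * pdir d2 F w) w"
    using d by (intro pdir_linear_direction) simp
  also have "\<dots> = pdir d1 (pdir d1 F) w + c * pdir d1 (pdir d2 F) w + c * (pdir d2 (pdir d1 F) w + c * pdir d2 (pdir d2 F) w)"
    using d by (simp add: pdir_add pdir_cmult)
  finally show ?thesis
    by (simp add: algebra_simps power2_eq_square)
qed

section \<open>Probing the invariance condition with polynomial solutions\<close>

lemma smooth_vf_smooth_dirs:
  assumes "smooth_vf X"
  shows "smooth_dirs (xiX X)" "smooth_dirs (xiY X)" "smooth_dirs (tauT X)" "smooth_dirs (etaV X)"
  using assms by (simp_all add: smooth_vf_def smooth_dirs_iff_smoothC)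

definition pt4 :: "R3 \<Rightarrow> real \<Rightarrow> R4" where
  "pt4 z v = (fst z, fst (snd z), snd (snd z), v)"

lemma pt4_cases: obtains z v where "w = pt4 z v"
  using that[of "(fst w, fst (snd w), fst (snd (snd w)))" "snd (snd (snd w))"] by (simp add: pt4_def)

definition ex4 :: R4 where "ex4 = (1, 0, 0, 0)"
definition ey4 :: R4 where "ey4 = (0, 1, 0, 0)"
definition et4 :: R4 where "et4 = (0, 0, 1, 0)"
definition ev4 :: R4 where "ev4 = (0, 0, 0, 1)"

text \<open>Tangent vectors of the graph of \<open>v\<close> along the \<open>x\<close>-axis when \<open>v\<^sub>x = a\<close>, and similarly
  for \<open>y\<close> and \<open>t\<close>.\<close>

definition tangent_x :: "real \<Rightarrow> R4" where "tangent_x a = ex4 + a *\<^sub>R ev4"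
definition tangent_y :: "real \<Rightarrow> R4" where "tangent_y b = ey4 + b *\<^sub>R ev4"
definition tangent_t :: "real \<Rightarrow> R4" where "tangent_t c = et4 + c *\<^sub>R ev4"

text \<open>A solution of the equation at \<open>z0\<close> with prescribed first derivatives, prescribed mixed
  derivatives \<open>v\<^sub>x\<^sub>t, v\<^sub>x\<^sub>x\<^sub>x\<^sub>t, v\<^sub>x\<^sub>y, v\<^sub>x\<^sub>x\<^sub>x\<^sub>y, v\<^sub>y\<^sub>t\<close>, and vanishing pure second derivatives.\<close>

definition probe1 :: "R3 \<Rightarrow> real \<Rightarrow> real \<Rightarrow> real \<Rightarrow> real \<Rightarrow> real \<Rightarrow> real \<Rightarrow> real \<Rightarrow> real \<Rightarrow> real \<Rightarrow> R3 \<Rightarrow> real" where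
  "probe1 z0 u0 a b c n1 n3 m1 m3 r = (\<lambda>z.
     u0 + a * (fst z - fst z0) + b * (fst (snd z) - fst (snd z0)) + c * (snd (snd z) - snd (snd z0))
     + n1 * ((fst z - fst z0) * (snd (snd z) - snd (snd z0)))
     + n3 / 6 * ((fst z - fst z0) ^ 3 * (snd (snd z) - snd (snd z0)))
     + m1 * ((fst z - fst z0) * (fst (snd z) - fst (snd z0)))
     + m3 / 6 * ((fst z - fst z0) ^ 3 * (fst (snd z) - fst (snd z0)))
     + r * ((fst (snd z) - fst (snd z0)) * (snd (snd z) - snd (snd z0))))"

lemma probe1_polyfun: "probe1 z0 u0 a b c n1 n3 m1 m3 r \<in> polyfun"
  unfolding probe1_def by (intro polyfun_R3_intros)

definition prDelta_probe1 :: "real \<Rightarrow> real \<Rightarrow> real \<Rightarrow> vf \<Rightarrow> R3 \<Rightarrow> real \<Rightarrow> real \<Rightarrow> real \<Rightarrow> real \<Rightarrow> real \<Rightarrow> real \<Rightarrow> real \<Rightarrow> real \<Rightarrow> real \<Rightarrow> real" where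
  "prDelta_probe1 p s2 e X z0 u0 a b c n1 n3 m1 m3 r =
    (let E = etaV X; A = xiX X; B = xiY X; C = tauT X; w = pt4 z0 u0;
         Tx = tangent_x a; Ty = tangent_y b; Tt = tangent_t c in
    (pdirn 2 Tt E w - a * pdirn 2 Tt A w - 2 * n1 * pdirn 1 Tt A w - b * pdirn 2 Tt B w - 2 * r * pdirn 1 Tt B w
       - c * pdirn 2 Tt C w)
  - (1 + (p + 1) * a powr p) * (pdirn 2 Tx E w - a * pdirn 2 Tx A w - b * pdirn 2 Tx B w - 2 * m1 * pdirn 1 Tx B w
       - c * pdirn 2 Tx C w - 2 * n1 * pdirn 1 Tx C w)
  - e * (pdirn 4 Tx E w - a * pdirn 4 Tx A w - b * pdirn 4 Tx B w - 4 * m1 * pdirn 3 Tx B w - 4 * m3 * pdirn 1 Tx B w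
       - c * pdirn 4 Tx C w - 4 * n1 * pdirn 3 Tx C w - 4 * n3 * pdirn 1 Tx C w)
  - s2 * (pdirn 2 Ty E w - a * pdirn 2 Ty A w - 2 * m1 * pdirn 1 Ty A w - b * pdirn 2 Ty B w - c * pdirn 2 Ty C w
       - 2 * r * pdirn 1 Ty C w))"

lemma prDelta_probe1_expand:
  "prDelta_probe1 p s2 e X z0 u0 a b c n1 n3 m1 m3 r =
   prDelta_probe1 p s2 e X z0 u0 a b c 0 0 0 0 0
   + n1 * (- 2 * pdirn 1 (tangent_t c) (xiX X) (pt4 z0 u0) + 2 * (1 + (p + 1) * a powr p) * pdirn 1 (tangent_x a) (tauT X) (pt4 z0 u0)
           + 4 * e * pdirn 3 (tangent_x a) (tauT X) (pt4 z0 u0))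
   + n3 * (4 * e * pdirn 1 (tangent_x a) (tauT X) (pt4 z0 u0))
   + m1 * (2 * (1 + (p + 1) * a powr p) * pdirn 1 (tangent_x a) (xiY X) (pt4 z0 u0) + 4 * e * pdirn 3 (tangent_x a) (xiY X) (pt4 z0 u0)
           + 2 * s2 * pdirn 1 (tangent_y b) (xiX X) (pt4 z0 u0))
   + m3 * (4 * e * pdirn 1 (tangent_x a) (xiY X) (pt4 z0 u0))
   + r * (- 2 * pdirn 1 (tangent_t c) (xiY X) (pt4 z0 u0) + 2 * s2 * pdirn 1 (tangent_y b) (tauT X) (pt4 z0 u0))"
  unfolding prDelta_probe1_def Let_def by (simp add: algebra_simps)

context
  fixes z0 :: R3 and u0 a b c n1 n3 m1 m3 r :: real
begin

abbreviation "v1 \<equiv> probe1 z0 u0 a b c n1 n3 m1 m3 r"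

lemma probe1_pdir:
  "pdir ex v1 = (\<lambda>z. a + n1 * (snd (snd z) - snd (snd z0))
     + n3 / 2 * ((fst z - fst z0) ^ 2 * (snd (snd z) - snd (snd z0)))
     + m1 * (fst (snd z) - fst (snd z0)) + m3 / 2 * ((fst z - fst z0) ^ 2 * (fst (snd z) - fst (snd z0))))"
  "pdir ey v1 = (\<lambda>z. b + m1 * (fst z - fst z0) + m3 / 6 * (fst z - fst z0) ^ 3
     + r * (snd (snd z) - snd (snd z0)))"
  "pdir et v1 = (\<lambda>z. c + n1 * (fst z - fst z0) + n3 / 6 * (fst z - fst z0) ^ 3
     + r * (fst (snd z) - fst (snd z0)))"
  unfolding pdir_def
  by (rule ext, rule DERIV_imp_deriv,
      auto simp: probe1_def ex_def ey_def et_def algebra_simps intro!: derivative_eq_intros)+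

lemma probe1_slice:
  "slice ex v1 z0 = (\<lambda>s. u0 + a * s)" "slice ey v1 z0 = (\<lambda>s. u0 + b * s)" "slice et v1 z0 = (\<lambda>s. u0 + c * s)"
  by (auto simp: slice_def probe1_def ex_def ey_def et_def)

lemma probe1_pdir_slice:
  "slice ex (pdir ex v1) z0 = (\<lambda>s. a)" "slice et (pdir ex v1) z0 = (\<lambda>s. a + n1 * s)"
  "slice ey (pdir ex v1) z0 = (\<lambda>s. a + m1 * s)"
  "slice ex (pdir ey v1) z0 = (\<lambda>s. b + m1 * s + m3 / 6 * s ^ 3)" "slice et (pdir ey v1) z0 = (\<lambda>s. b + r * s)"
  "slice ey (pdir ey v1) z0 = (\<lambda>s. b)"
  "slice ex (pdir et v1) z0 = (\<lambda>s. c + n1 * s + n3 / 6 * s ^ 3)" "slice ey (pdir et v1) z0 = (\<lambda>s. c + r * s)"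
  "slice et (pdir et v1) z0 = (\<lambda>s. c)"
  unfolding slice_def probe1_pdir by (auto simp: ex_def ey_def et_def)

lemma graphpt_probe1_line:
  "graphpt v1 (z0 + s *\<^sub>R ex) = pt4 z0 u0 + s *\<^sub>R tangent_x a"
  "graphpt v1 (z0 + s *\<^sub>R ey) = pt4 z0 u0 + s *\<^sub>R tangent_y b"
  "graphpt v1 (z0 + s *\<^sub>R et) = pt4 z0 u0 + s *\<^sub>R tangent_t c"
  by (auto simp: graphpt_def probe1_def ex_def ey_def et_def pt4_def tangent_x_def tangent_y_def tangent_t_def
      ex4_def ey4_def et4_def ev4_def)

lemma slice_charQ_probe1:
  "slice ex (charQ X v1) z0 = (\<lambda>s. slice (tangent_x a) (etaV X) (pt4 z0 u0) s - slice (tangent_x a) (xiX X) (pt4 z0 u0) s * a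
     - slice (tangent_x a) (xiY X) (pt4 z0 u0) s * (b + m1 * s + m3 / 6 * s ^ 3)
     - slice (tangent_x a) (tauT X) (pt4 z0 u0) s * (c + n1 * s + n3 / 6 * s ^ 3))"
  "slice et (charQ X v1) z0 = (\<lambda>s. slice (tangent_t c) (etaV X) (pt4 z0 u0) s - slice (tangent_t c) (xiX X) (pt4 z0 u0) s * (a + n1 * s)
     - slice (tangent_t c) (xiY X) (pt4 z0 u0) s * (b + r * s)
     - slice (tangent_t c) (tauT X) (pt4 z0 u0) s * c)"
  "slice ey (charQ X v1) z0 = (\<lambda>s. slice (tangent_y b) (etaV X) (pt4 z0 u0) s - slice (tangent_y b) (xiX X) (pt4 z0 u0) s * (a + m1 * s)
     - slice (tangent_y b) (xiY X) (pt4 z0 u0) s * b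
     - slice (tangent_y b) (tauT X) (pt4 z0 u0) s * (c + r * s))"
  using probe1_pdir_slice[THEN fun_cong]
  by (auto simp: slice_def charQ_def graphpt_probe1_line)

lemma probe1_jet:
  "graphpt v1 z0 = pt4 z0 u0" "pdir ex v1 z0 = a"
  "Dlist [ex] v1 z0 = a" "Dlist [ex, ex] v1 z0 = 0" "Dlist [et, et] v1 z0 = 0" "Dlist [ey, ey] v1 z0 = 0"
  "Dlist [ex, ex, ex, ex] v1 z0 = 0"
  using graphpt_probe1_line(1)[of 0] fun_cong[OF probe1_pdir_slice(1), of 0]
  by (simp_all only: Dlist_eq_nderiv_slice probe1_slice) simp_all

lemma prDelta_probe1_eq:
  assumes "smooth_vf X"
  shows "prDelta p s2 e X v1 z0 = prDelta_probe1 p s2 e X z0 u0 a b c n1 n3 m1 m3 r"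
proof -
  have single: "Dlist [d] f = pdir d f" for d and f :: "R3 \<Rightarrow> real"
    by simp
  show ?thesis
    unfolding prDelta_def etaJ_def Dlist_append
    apply (simp only: single Dlist_eq_nderiv_slice(2,4) slice_charQ_probe1 probe1_pdir_slice probe1_slice probe1_jet)
    apply (simp add: smooth_vf_smooth_dirs[OF assms] prDelta_probe1_def Let_def fact_numeral)
    apply (simp add: algebra_simps pdirn_expand(1))
    done
qed

end

lemma quadratic_eq_0_imp_leading_eq_0:
  fixes a b d :: real
  assumes "\<And>c. a + c * b + c\<^sup>2 * d = 0"
  shows "d = 0"
  using assms[of 1] assms[of "-1"] assms[of 0] by simp

section \<open>The determining equations\<close>

locale boussinesq_symmetry =
  fixes p s2 e :: real and X :: vf
  assumes symmetry: "is_point_symmetry p s2 e X" and smooth: "smooth_vf X"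
    and e_nonzero: "e \<noteq> 0" and s2_square: "s2 * s2 = 1" and p_nonzero: "p \<noteq> 0" and p_neq_minus_1: "p \<noteq> -1"
begin

abbreviation "\<xi>x \<equiv> xiX X"
abbreviation "\<xi>y \<equiv> xiY X"
abbreviation "\<tau> \<equiv> tauT X"
abbreviation "\<eta> \<equiv> etaV X"

lemmas smooth_components = smooth_vf_smooth_dirs[OF smooth]

lemma differentiable_components:
  "\<xi>x differentiable (at w)" "\<xi>y differentiable (at w)" "\<tau> differentiable (at w)" "\<eta> differentiable (at w)"
  using smooth_components smooth_dirs_differentiable by auto

lemma s2_nonzero: "s2 \<noteq> 0"
  using s2_square by auto

lemma prDelta_probe1_eq_0:
  assumes "a > 0"
  shows "prDelta_probe1 p s2 e X z0 u0 a b c n1 n3 m1 m3 r = 0"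
proof -
  let ?u = "probe1 z0 u0 a b c n1 n3 m1 m3 r"
  have "smoothC ?u"
    using probe1_polyfun polyfun_smooth_dirs smooth_dirs_iff_smoothC by blast
  moreover have "Dlist [ex] ?u z0 > 0"
    using assms by (simp only: probe1_jet)
  moreover have "Delta p s2 e ?u z0 = 0"
    by (simp only: Delta_def probe1_jet)
  ultimately have "prDelta p s2 e X ?u z0 = 0"
    using symmetry unfolding is_point_symmetry_def by blast
  then show ?thesis
    using prDelta_probe1_eq[OF smooth] by simp
qed

lemma tau_pdir_tangent_x_pos: "a > 0 \<Longrightarrow> pdirn 1 (tangent_x a) \<tau> (pt4 z0 u0) = 0"
  using prDelta_probe1_eq_0[of a z0 u0 0 0 0 1 0 0 0] prDelta_probe1_eq_0[of a z0 u0 0 0 0 0 0 0 0]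
    prDelta_probe1_expand[of p s2 e X z0 u0 a 0 0 0 1 0 0 0] e_nonzero
  by simp

lemma xiy_pdir_tangent_x_pos: "a > 0 \<Longrightarrow> pdirn 1 (tangent_x a) \<xi>y (pt4 z0 u0) = 0"
  using prDelta_probe1_eq_0[of a z0 u0 0 0 0 0 0 1 0] prDelta_probe1_eq_0[of a z0 u0 0 0 0 0 0 0 0]
    prDelta_probe1_expand[of p s2 e X z0 u0 a 0 0 0 0 0 1 0] e_nonzero
  by simp

lemma tau_pdir_x_v: "pdir ex4 \<tau> w = 0" "pdir ev4 \<tau> w = 0"
proof -
  obtain z0 u0 where w: "w = pt4 z0 u0"
    by (rule pt4_cases)
  have "pdir ex4 \<tau> w + a * pdir ev4 \<tau> w = 0" if "a > 0" for a
    using tau_pdir_tangent_x_pos[OF that, of z0 u0] differentiable_components(3)[of w]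
    by (simp add: pdirn_expand tangent_x_def pdir_linear_direction w)
  from this[of 1] this[of 2] show "pdir ex4 \<tau> w = 0" "pdir ev4 \<tau> w = 0"
    by simp_all
qed

lemma xiy_pdir_x_v: "pdir ex4 \<xi>y w = 0" "pdir ev4 \<xi>y w = 0"
proof -
  obtain z0 u0 where w: "w = pt4 z0 u0"
    by (rule pt4_cases)
  have "pdir ex4 \<xi>y w + a * pdir ev4 \<xi>y w = 0" if "a > 0" for a
    using xiy_pdir_tangent_x_pos[OF that, of z0 u0] differentiable_components(2)[of w]
    by (simp add: pdirn_expand tangent_x_def pdir_linear_direction w)
  from this[of 1] this[of 2] show "pdir ex4 \<xi>y w = 0" "pdir ev4 \<xi>y w = 0"
    by simp_all
qed

lemma tau_pdir_tangent_x: "pdir (tangent_x a) \<tau> w = 0"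
  using tau_pdir_x_v differentiable_components(3) by (simp add: tangent_x_def pdir_linear_direction)

lemma xiy_pdir_tangent_x: "pdir (tangent_x a) \<xi>y w = 0"
  using xiy_pdir_x_v differentiable_components(2) by (simp add: tangent_x_def pdir_linear_direction)

lemma xix_pdir_tangent_t_pt4: "pdirn 1 (tangent_t c) \<xi>x (pt4 z0 u0) = 0"
proof -
  have "pdirn 1 (tangent_x 1) \<tau> (pt4 z0 u0) = 0" "pdirn 3 (tangent_x 1) \<tau> (pt4 z0 u0) = 0"
    using tau_pdir_tangent_x by (simp_all add: pdirn_expand pdir_pdir_eq_0)
  then show ?thesis
    using prDelta_probe1_eq_0[of 1 z0 u0 0 c 1 0 0 0 0] prDelta_probe1_eq_0[of 1 z0 u0 0 c 0 0 0 0 0]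
      prDelta_probe1_expand[of p s2 e X z0 u0 1 0 c 1 0 0 0 0]
    by simp
qed

lemma xix_pdir_tangent_y_pt4: "pdirn 1 (tangent_y b) \<xi>x (pt4 z0 u0) = 0"
proof -
  have "pdirn 1 (tangent_x 1) \<xi>y (pt4 z0 u0) = 0" "pdirn 3 (tangent_x 1) \<xi>y (pt4 z0 u0) = 0"
    using xiy_pdir_tangent_x by (simp_all add: pdirn_expand pdir_pdir_eq_0)
  then show ?thesis
    using prDelta_probe1_eq_0[of 1 z0 u0 b 0 0 0 1 0 0] prDelta_probe1_eq_0[of 1 z0 u0 b 0 0 0 0 0 0]
      prDelta_probe1_expand[of p s2 e X z0 u0 1 b 0 0 0 1 0 0] s2_nonzero
    by simp
qed

lemma xiy_tau_tangent_pt4: "pdirn 1 (tangent_t c) \<xi>y (pt4 z0 u0) = s2 * pdirn 1 (tangent_y b) \<tau> (pt4 z0 u0)"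
  using prDelta_probe1_eq_0[of 1 z0 u0 b c 0 0 0 0 1] prDelta_probe1_eq_0[of 1 z0 u0 b c 0 0 0 0 0]
    prDelta_probe1_expand[of p s2 e X z0 u0 1 b c 0 0 0 0 1]
  by simp

lemma xix_pdir_t_v_y: "pdir et4 \<xi>x w = 0" "pdir ev4 \<xi>x w = 0" "pdir ey4 \<xi>x w = 0"
proof -
  obtain z0 u0 where w: "w = pt4 z0 u0"
    by (rule pt4_cases)
  have "pdir et4 \<xi>x w + c * pdir ev4 \<xi>x w = 0" for c
    using xix_pdir_tangent_t_pt4[of c z0 u0] differentiable_components(1)[of w]
    by (simp add: pdirn_expand tangent_t_def pdir_linear_direction w)
  from this[of 0] this[of 1] show "pdir et4 \<xi>x w = 0" "pdir ev4 \<xi>x w = 0"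
    by simp_all
  have "pdir ey4 \<xi>x w + 0 * pdir ev4 \<xi>x w = 0"
    using xix_pdir_tangent_y_pt4[of 0 z0 u0] differentiable_components(1)[of w]
    by (simp add: pdirn_expand tangent_y_def pdir_linear_direction w)
  then show "pdir ey4 \<xi>x w = 0"
    by simp
qed

lemma xiy_pdir_t: "pdir et4 \<xi>y w = s2 * pdir ey4 \<tau> w"
proof -
  obtain z0 u0 where w: "w = pt4 z0 u0"
    by (rule pt4_cases)
  show ?thesis
    using xiy_tau_tangent_pt4[of 0 z0 u0 0] differentiable_components(2,3)[of w]
    by (simp add: pdirn_expand tangent_t_def tangent_y_def pdir_linear_direction w)
qed

lemma tau_v_invariant: "\<tau> (w + s *\<^sub>R ev4) = \<tau> w"
  using constant_along_direction[of \<tau> ev4] differentiable_components(3) tau_pdir_x_v(2) by blast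

lemma xix_v_invariant: "\<xi>x (w + s *\<^sub>R ev4) = \<xi>x w"
  using constant_along_direction[of \<xi>x ev4] differentiable_components(1) xix_pdir_t_v_y(2) by blast

lemma xiy_v_invariant: "\<xi>y (w + s *\<^sub>R ev4) = \<xi>y w"
  using constant_along_direction[of \<xi>y ev4] differentiable_components(2) xiy_pdir_x_v(2) by blast

text \<open>Taking \<open>v\<^sub>t = c\<close> as the only free parameter of \<^const>\<open>probe1\<close>, the condition becomes a
  quadratic polynomial in \<open>c\<close> whose leading coefficient is \<open>\<eta>\<^sub>v\<^sub>v\<close>.\<close>

lemma eta_pdir_vv: "pdir ev4 (pdir ev4 \<eta>) w = 0"
proof -
  obtain z0 u0 where w: "w = pt4 z0 u0"
    by (rule pt4_cases)
  let ?G = "pdirn 2 (tangent_t 0) \<eta> w - (1 + (p + 1)) * (pdirn 2 (tangent_x 1) \<eta> w - pdirn 2 (tangent_x 1) \<xi>x w)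
            - e * (pdirn 4 (tangent_x 1) \<eta> w - pdirn 4 (tangent_x 1) \<xi>x w)
            - s2 * (pdirn 2 (tangent_y 0) \<eta> w - pdirn 2 (tangent_y 0) \<xi>x w)"
  let ?H = "pdir ev4 (pdir et4 \<eta>) w + pdir et4 (pdir ev4 \<eta>) w - pdir et4 (pdir et4 \<tau>) w
            + s2 * pdirn 2 (tangent_y 0) \<tau> w"
  have tau_vt: "pdir ev4 (pdir et4 \<tau>) w = 0"
    by (rule pdir_eq_0_if_invariant, rule pdir_translation_invariant) (rule tau_v_invariant)
  have tau_v: "pdir et4 (pdir ev4 \<tau>) w = 0" "pdir ev4 (pdir ev4 \<tau>) w = 0"
    using tau_pdir_x_v(2) by (simp_all add: pdir_pdir_eq_0)
  have tau_xx: "pdirn 2 (tangent_x 1) \<tau> w = 0" "pdirn 4 (tangent_x 1) \<tau> w = 0"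
    using tau_pdir_tangent_x by (simp_all add: pdirn_expand pdir_pdir_eq_0)
  have xix_tt: "pdirn 2 (tangent_t c) \<xi>x w = 0" for c
    using xix_pdir_t_v_y differentiable_components(1)
    by (simp add: pdirn_expand tangent_t_def pdir_linear_direction pdir_pdir_eq_0)
  have quadratic: "prDelta_probe1 p s2 e X z0 u0 1 0 c 0 0 0 0 0 = ?G + c * ?H + c\<^sup>2 * pdir ev4 (pdir ev4 \<eta>) w" for c
  proof -
    have "pdirn 2 (tangent_t c) \<eta> w = pdirn 2 (tangent_t 0) \<eta> w
            + c * (pdir ev4 (pdir et4 \<eta>) w + pdir et4 (pdir ev4 \<eta>) w) + c\<^sup>2 * pdir ev4 (pdir ev4 \<eta>) w"
      using pdirn_2_linear_direction[OF smooth_components(4), of et4 c ev4 w]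
        pdirn_2_linear_direction[OF smooth_components(4), of et4 0 ev4 w] by (simp add: tangent_t_def)
    moreover have "pdirn 2 (tangent_t c) \<tau> w = pdir et4 (pdir et4 \<tau>) w"
      using pdirn_2_linear_direction[OF smooth_components(3), of et4 c ev4 w] tau_vt tau_v by (simp add: tangent_t_def)
    ultimately show ?thesis
      unfolding prDelta_probe1_def Let_def using tau_xx xix_tt w by (simp add: algebra_simps power2_eq_square)
  qed
  have "?G + c * ?H + c\<^sup>2 * pdir ev4 (pdir ev4 \<eta>) w = 0" for c
    using quadratic[of c] prDelta_probe1_eq_0[of 1 z0 u0 0 c 0 0 0 0 0] by simp
  then show ?thesis
    by (rule quadratic_eq_0_imp_leading_eq_0)
qed

end

section \<open>Vector fields in reduced form\<close>

definition pr3 :: "R4 \<Rightarrow> R3" where "pr3 w = (fst w, fst (snd w), fst (snd (snd w)))"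
definition vcoord :: "R4 \<Rightarrow> real" where "vcoord w = snd (snd (snd w))"
definition emb :: "R3 \<Rightarrow> R4" where "emb z = pt4 z 0"

lemma pr3_graphpt [simp]: "pr3 (graphpt u z) = z"
  by (simp add: pr3_def graphpt_def)

lemma vcoord_graphpt [simp]: "vcoord (graphpt u z) = u z"
  by (simp add: vcoord_def graphpt_def)

lemma linear_emb: "linear emb"
  by (rule linearI) (auto simp: emb_def pt4_def)

lemma emb_basis: "emb ex = ex4" "emb ey = ey4" "emb et = et4"
  by (simp_all add: emb_def pt4_def ex_def ey_def et_def ex4_def ey4_def et4_def)

lemma emb_pr3_vcoord: "w = emb (pr3 w) + vcoord w *\<^sub>R ev4"
  by (simp add: emb_def pt4_def pr3_def vcoord_def ev4_def)

definition reduced_vf :: "(R3 \<Rightarrow> real) \<Rightarrow> (R3 \<Rightarrow> real) \<Rightarrow> (R3 \<Rightarrow> real) \<Rightarrow> (R3 \<Rightarrow> real) \<Rightarrow> (R3 \<Rightarrow> real) \<Rightarrow> vf" where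
  "reduced_vf cx cy ct al be = ((\<lambda>w. cx (pr3 w)), (\<lambda>w. cy (pr3 w)), (\<lambda>w. ct (pr3 w)),
                        (\<lambda>w. be (pr3 w) + vcoord w * al (pr3 w)))"

lemma reduced_vf_components:
  "xiX (reduced_vf cx cy ct al be) w = cx (pr3 w)" "xiY (reduced_vf cx cy ct al be) w = cy (pr3 w)"
  "tauT (reduced_vf cx cy ct al be) w = ct (pr3 w)"
  "etaV (reduced_vf cx cy ct al be) w = be (pr3 w) + vcoord w * al (pr3 w)"
  by (simp_all add: reduced_vf_def xiX_def xiY_def tauT_def etaV_def)

lemma slice_charQ_reduced_vf:
  "slice d (charQ (reduced_vf cx cy ct al be) u) z =
   (\<lambda>s. slice d be z s + slice d u z s * slice d al z s - slice d cx z s * slice d (pdir ex u) z s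
        - slice d cy z s * slice d (pdir ey u) z s - slice d ct z s * slice d (pdir et u) z s)"
  by (simp add: slice_def charQ_def reduced_vf_components mult.commute)

text \<open>The prolonged equation in jet coordinates; it agrees with \<^const>\<open>prDelta\<close> for reduced fields
  whose \<open>\<xi>\<^sup>x\<close> depends on \<open>x\<close> only and whose \<open>\<xi>\<^sup>y, \<tau>\<close> do not depend on \<open>x\<close>.\<close>

definition prDelta_reduced :: "real \<Rightarrow> real \<Rightarrow> real \<Rightarrow> (R3 \<Rightarrow> real) \<Rightarrow> (R3 \<Rightarrow> real) \<Rightarrow> (R3 \<Rightarrow> real) \<Rightarrow> (R3 \<Rightarrow> real) \<Rightarrow> (R3 \<Rightarrow> real) \<Rightarrow> (R3 \<Rightarrow> real) \<Rightarrow> R3 \<Rightarrow> real" where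
  "prDelta_reduced p s2 e cx cy ct al be u z0 = (let
     D = (\<lambda>F xs. Dlist xs F z0);
     u0 = u z0; ux = D u [ex]; uxx = D u [ex,ex]; uxxx = D u [ex,ex,ex]; uxxxx = D u [ex,ex,ex,ex];
     uy = D u [ey]; ut = D u [et]; uyy = D u [ey,ey]; utt = D u [et,et]; uty = D u [et,ey]; uyt = D u [ey,et];
     a0 = al z0;
     \<eta>x = D be [ex] + D al [ex] * u0 + a0 * ux - D cx [ex] * ux;
     \<eta>xx = D be [ex,ex] + D al [ex,ex] * u0 + 2 * D al [ex] * ux + a0 * uxx - D cx [ex,ex] * ux - 2 * D cx [ex] * uxx;
     \<eta>xxxx = D be [ex,ex,ex,ex] + D al [ex,ex,ex,ex] * u0 + 4 * D al [ex,ex,ex] * ux + 6 * D al [ex,ex] * uxx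
        + 4 * D al [ex] * uxxx + a0 * uxxxx - D cx [ex,ex,ex,ex] * ux - 4 * D cx [ex,ex,ex] * uxx
        - 6 * D cx [ex,ex] * uxxx - 4 * D cx [ex] * uxxxx;
     \<eta>tt = D be [et,et] + D al [et,et] * u0 + 2 * D al [et] * ut + a0 * utt - D cy [et,et] * uy - 2 * D cy [et] * uty
        - D ct [et,et] * ut - 2 * D ct [et] * utt;
     \<eta>yy = D be [ey,ey] + D al [ey,ey] * u0 + 2 * D al [ey] * uy + a0 * uyy - D cy [ey,ey] * uy - 2 * D cy [ey] * uyy
        - D ct [ey,ey] * ut - 2 * D ct [ey] * uyt
   in \<eta>tt - (1 + (p + 1) * ux powr p) * \<eta>xx - (p + 1) * p * ux powr (p - 1) * uxx * \<eta>x - e * \<eta>xxxx - s2 * \<eta>yy)"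

lemma Dlist_eq_0_if_pdir_eq_0:
  assumes "pdir d F = (\<lambda>z. 0)"
  shows "Dlist [d] F z = 0" "Dlist [d, d] F z = 0" "Dlist [d, d, d] F z = 0" "Dlist [d, d, d, d] F z = 0"
  using assms by simp_all

lemma prDelta_reduced_vf:
  assumes smooth: "smooth_dirs cx" "smooth_dirs cy" "smooth_dirs ct" "smooth_dirs al" "smooth_dirs be" "smooth_dirs u"
    and indep: "pdir ey cx = (\<lambda>z. 0)" "pdir et cx = (\<lambda>z. 0)" "pdir ex cy = (\<lambda>z. 0)" "pdir ex ct = (\<lambda>z. 0)"
  shows "prDelta p s2 e (reduced_vf cx cy ct al be) u z0 = prDelta_reduced p s2 e cx cy ct al be u z0"
proof -
  have smooth_pdir_u: "smooth_dirs (pdir ex u)" "smooth_dirs (pdir ey u)" "smooth_dirs (pdir et u)"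
    using smooth(6) smooth_dirs_pdir by auto
  have nderiv_Dlist: "nderiv 1 (slice d F z) 0 = Dlist [d] F z" "nderiv 2 (slice d F z) 0 = Dlist [d, d] F z"
    "nderiv 3 (slice d F z) 0 = Dlist [d, d, d] F z" "nderiv 4 (slice d F z) 0 = Dlist [d, d, d, d] F z"
    "nderiv (Suc 0) (slice d F z) 0 = Dlist [d] F z"
    for d and F :: "R3 \<Rightarrow> real" and z
    by (simp_all only: Dlist_eq_nderiv_slice One_nat_def)
  have Dlist_pdir: "Dlist xs (pdir d F) z = Dlist (xs @ [d]) F z" for xs d and F :: "R3 \<Rightarrow> real" and z
    by (simp add: Dlist_append)
  have pdir_Dlist: "pdir d F z = Dlist [d] F z" for d and F :: "R3 \<Rightarrow> real" and z
    by simp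
  note zeros = Dlist_eq_0_if_pdir_eq_0[OF indep(1)] Dlist_eq_0_if_pdir_eq_0[OF indep(2)]
    Dlist_eq_0_if_pdir_eq_0[OF indep(3)] Dlist_eq_0_if_pdir_eq_0[OF indep(4)]
  show ?thesis
    unfolding prDelta_def etaJ_def
    apply (simp only: append_Cons append_Nil Dlist_eq_nderiv_slice(1,2,4) slice_charQ_reduced_vf
        reduced_vf_components pr3_graphpt)
    apply (simp add: smooth smooth_pdir_u nderiv_Dlist Dlist_pdir del: Dlist_Cons nderiv_slice_eq_pdirn pdirn_Suc_0)
    apply (simp only: pdir_Dlist zeros)
    apply (simp add: prDelta_reduced_def Let_def algebra_simps del: Dlist_Cons)
    done
qed

text \<open>A solution of the equation at \<open>z0\<close> with prescribed pure derivatives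
  \<open>v, v\<^sub>x, v\<^sub>x\<^sub>x, v\<^sub>x\<^sub>x\<^sub>x, v\<^sub>x\<^sub>x\<^sub>x\<^sub>x, v\<^sub>y\<^sub>y\<close>, when \<open>k\<close> is chosen as the resulting value of \<open>v\<^sub>t\<^sub>t\<close>.\<close>

definition probe2 :: "R3 \<Rightarrow> real \<Rightarrow> real \<Rightarrow> real \<Rightarrow> real \<Rightarrow> real \<Rightarrow> real \<Rightarrow> real \<Rightarrow> R3 \<Rightarrow> real" where
  "probe2 z0 u0 a q g m h k = (\<lambda>z.
     u0 + a * (fst z - fst z0) + q / 2 * (fst z - fst z0) ^ 2 + g / 6 * (fst z - fst z0) ^ 3
     + m / 24 * (fst z - fst z0) ^ 4 + h / 2 * (fst (snd z) - fst (snd z0)) ^ 2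
     + k / 2 * (snd (snd z) - snd (snd z0)) ^ 2)"

lemma probe2_smooth_dirs: "smooth_dirs (probe2 z0 u0 a q g m h k)"
proof -
  have "probe2 z0 u0 a q g m h k \<in> polyfun"
    unfolding probe2_def by (intro polyfun_R3_intros)
  then show ?thesis
    by (rule polyfun_smooth_dirs)
qed

context
  fixes z0 :: R3 and u0 a q g m h k :: real
begin

abbreviation "v2 \<equiv> probe2 z0 u0 a q g m h k"

lemma probe2_pdir: "pdir ey v2 = (\<lambda>z. h * (fst (snd z) - fst (snd z0)))"
  "pdir et v2 = (\<lambda>z. k * (snd (snd z) - snd (snd z0)))"
  unfolding pdir_def
  by (rule ext, rule DERIV_imp_deriv, auto simp: probe2_def ey_def et_def intro!: derivative_eq_intros)+

lemma probe2_slice: "slice ex v2 z0 = (\<lambda>s. u0 + a * s + q / 2 * s ^ 2 + g / 6 * s ^ 3 + m / 24 * s ^ 4)"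
  "slice ey v2 z0 = (\<lambda>s. u0 + h / 2 * s ^ 2)" "slice et v2 z0 = (\<lambda>s. u0 + k / 2 * s ^ 2)"
  by (auto simp: slice_def probe2_def ex_def ey_def et_def)

lemma probe2_pdir_slice: "slice et (pdir ey v2) z0 = (\<lambda>s. 0)" "slice ey (pdir et v2) z0 = (\<lambda>s. 0)"
  unfolding slice_def probe2_pdir by (auto simp: ey_def et_def)

lemma probe2_jet:
  "v2 z0 = u0" "Dlist [ex] v2 z0 = a" "Dlist [ex, ex] v2 z0 = q" "Dlist [ex, ex, ex] v2 z0 = g"
  "Dlist [ex, ex, ex, ex] v2 z0 = m" "Dlist [ey] v2 z0 = 0" "Dlist [et] v2 z0 = 0"
  "Dlist [ey, ey] v2 z0 = h" "Dlist [et, et] v2 z0 = k" "Dlist [et, ey] v2 z0 = 0" "Dlist [ey, et] v2 z0 = 0"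
proof -
  show "v2 z0 = u0"
    by (simp add: probe2_def)
  show "Dlist [ex] v2 z0 = a" "Dlist [ex, ex] v2 z0 = q" "Dlist [ex, ex, ex] v2 z0 = g"
       "Dlist [ex, ex, ex, ex] v2 z0 = m" "Dlist [ey] v2 z0 = 0" "Dlist [et] v2 z0 = 0"
       "Dlist [ey, ey] v2 z0 = h" "Dlist [et, et] v2 z0 = k"
    by (simp_all only: Dlist_eq_nderiv_slice probe2_slice) (simp_all add: fact_numeral)
  have "Dlist [et, ey] v2 z0 = Dlist [et] (pdir ey v2) z0" "Dlist [ey, et] v2 z0 = Dlist [ey] (pdir et v2) z0"
    by simp_all
  then show "Dlist [et, ey] v2 z0 = 0" "Dlist [ey, et] v2 z0 = 0"
    by (simp_all only: Dlist_eq_nderiv_slice probe2_pdir_slice) simp_all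
qed

end

lemma prDelta_reduced_probe2:
  "prDelta_reduced p s2 e cx cy ct al be (probe2 z0 u0 a q g m h k) z0 =
     (Dlist [et,et] be z0 - (1 + (p + 1) * a powr p) * (Dlist [ex,ex] be z0 + 2 * Dlist [ex] al z0 * a - Dlist [ex,ex] cx z0 * a)
      - e * (Dlist [ex,ex,ex,ex] be z0 + 4 * Dlist [ex,ex,ex] al z0 * a - Dlist [ex,ex,ex,ex] cx z0 * a)
      - s2 * Dlist [ey,ey] be z0)
   + u0 * (Dlist [et,et] al z0 - (1 + (p + 1) * a powr p) * Dlist [ex,ex] al z0 - e * Dlist [ex,ex,ex,ex] al z0
           - s2 * Dlist [ey,ey] al z0)
   + q * (- (1 + (p + 1) * a powr p) * (al z0 - 2 * Dlist [ex] cx z0)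
          - (p + 1) * p * a powr (p - 1) * (Dlist [ex] be z0 + (al z0 - Dlist [ex] cx z0) * a)
          - e * (6 * Dlist [ex,ex] al z0 - 4 * Dlist [ex,ex,ex] cx z0)
          + u0 * (- (p + 1) * p * a powr (p - 1) * Dlist [ex] al z0))
   + g * (- e * (4 * Dlist [ex] al z0 - 6 * Dlist [ex,ex] cx z0))
   + m * (- e * (al z0 - 4 * Dlist [ex] cx z0))
   + h * (- s2 * (al z0 - 2 * Dlist [ey] cy z0))
   + k * (al z0 - 2 * Dlist [et] ct z0)"
  unfolding prDelta_reduced_def Let_def probe2_jet by (simp add: algebra_simps)

context boussinesq_symmetry
begin

definition "\<xi>x3 = (\<lambda>z. \<xi>x (emb z))"
definition "\<xi>y3 = (\<lambda>z. \<xi>y (emb z))"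
definition "\<tau>3 = (\<lambda>z. \<tau> (emb z))"
definition "\<alpha> = (\<lambda>z. pdir ev4 \<eta> (emb z))"
definition "\<beta> = (\<lambda>z. \<eta> (emb z))"

lemma smooth_reduced: "smooth_dirs \<xi>x3" "smooth_dirs \<xi>y3" "smooth_dirs \<tau>3" "smooth_dirs \<alpha>" "smooth_dirs \<beta>"
  unfolding \<xi>x3_def \<xi>y3_def \<tau>3_def \<alpha>_def \<beta>_def
  using smooth_dirs_compose_linear[OF linear_emb] smooth_components smooth_dirs_pdir[OF smooth_components(4)]
  by auto

lemma eta_affine_v: "\<eta> (w + s *\<^sub>R ev4) = \<eta> w + s * pdir ev4 \<eta> w"
  using affine_along_direction[of \<eta> ev4] differentiable_components(4)
    smooth_dirs_pdir_differentiable[OF smooth_components(4)] eta_pdir_vv by blast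

lemma X_reduced: "X = reduced_vf \<xi>x3 \<xi>y3 \<tau>3 \<alpha> \<beta>"
proof -
  have "\<xi>x = (\<lambda>w. \<xi>x3 (pr3 w))" "\<xi>y = (\<lambda>w. \<xi>y3 (pr3 w))" "\<tau> = (\<lambda>w. \<tau>3 (pr3 w))"
    "\<eta> = (\<lambda>w. \<beta> (pr3 w) + vcoord w * \<alpha> (pr3 w))"
    unfolding \<xi>x3_def \<xi>y3_def \<tau>3_def \<alpha>_def \<beta>_def
    by (rule ext, subst (1) emb_pr3_vcoord, rule xix_v_invariant xiy_v_invariant tau_v_invariant eta_affine_v)+
  moreover have "X = (\<xi>x, \<xi>y, \<tau>, \<eta>)"
    by (simp add: xiX_def xiY_def tauT_def etaV_def)
  ultimately show ?thesis
    by (simp add: reduced_vf_def)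
qed

lemma pdir_reduced: "pdir d \<xi>x3 z = pdir (emb d) \<xi>x (emb z)" "pdir d \<xi>y3 z = pdir (emb d) \<xi>y (emb z)"
  "pdir d \<tau>3 z = pdir (emb d) \<tau> (emb z)"
  unfolding \<xi>x3_def \<xi>y3_def \<tau>3_def by (simp_all add: pdir_compose_linear[OF linear_emb])

lemma reduced_independence:
  "pdir ey \<xi>x3 = (\<lambda>z. 0)" "pdir et \<xi>x3 = (\<lambda>z. 0)" "pdir ex \<xi>y3 = (\<lambda>z. 0)" "pdir ex \<tau>3 = (\<lambda>z. 0)"
  by (simp_all add: fun_eq_iff pdir_reduced emb_basis xix_pdir_t_v_y xiy_pdir_x_v tau_pdir_x_v)

lemma xiy3_t_eq_tau3_y: "pdir et \<xi>y3 z = s2 * pdir ey \<tau>3 z"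
  by (simp add: pdir_reduced emb_basis xiy_pdir_t)

lemma prDelta_reduced_probe2_eq_0:
  assumes "a > 0"
  shows "prDelta_reduced p s2 e \<xi>x3 \<xi>y3 \<tau>3 \<alpha> \<beta>
           (probe2 z0 u0 a q g m h ((1 + (p + 1) * a powr p) * q + e * m + s2 * h)) z0 = 0"
proof -
  let ?u = "probe2 z0 u0 a q g m h ((1 + (p + 1) * a powr p) * q + e * m + s2 * h)"
  have "smoothC ?u"
    using probe2_smooth_dirs smooth_dirs_iff_smoothC by blast
  moreover have "Dlist [ex] ?u z0 > 0"
    using assms by (simp only: probe2_jet)
  moreover have "Delta p s2 e ?u z0 = 0"
    unfolding Delta_def probe2_jet by (simp add: algebra_simps)
  ultimately have "prDelta p s2 e X ?u z0 = 0"
    using symmetry unfolding is_point_symmetry_def by blast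
  then show ?thesis
    using prDelta_reduced_vf[OF smooth_reduced probe2_smooth_dirs reduced_independence] X_reduced by simp
qed

end

section \<open>Determining equations for reduced fields\<close>

lemma powr_combination_eq_0_imp:
  fixes c0 c1 c2 r s :: real
  assumes r: "r \<noteq> 0" and s: "s \<noteq> 0" and rs: "r \<noteq> s"
    and h: "\<And>a. a > 0 \<Longrightarrow> c0 + c1 * a powr r + c2 * a powr s = 0"
  shows "c0 = 0 \<and> c1 = 0 \<and> c2 = 0"
proof -
  define x where "x = (2::real) powr r"
  define y where "y = (2::real) powr s"
  have x1: "x \<noteq> 1" and y1: "y \<noteq> 1" and xy: "x \<noteq> y"
    unfolding x_def y_def using r s rs by (simp_all add: powr_eq_one_iff_gen powr_inj)
  have "(4::real) powr r = x\<^sup>2" "(4::real) powr s = y\<^sup>2"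
    unfolding x_def y_def using powr_mult[of 2 2 r] powr_mult[of 2 2 s] by (simp_all add: power2_eq_square)
  then have e1: "c0 + c1 + c2 = 0" and e2: "c0 + c1 * x + c2 * y = 0" and e3: "c0 + c1 * x\<^sup>2 + c2 * y\<^sup>2 = 0"
    using h[of 1] h[of 2] h[of 4] unfolding x_def y_def by simp_all
  have f1: "c1 * (x - 1) + c2 * (y - 1) = 0" and f2: "c1 * (x\<^sup>2 - 1) + c2 * (y\<^sup>2 - 1) = 0"
    using e1 e2 e3 by (simp_all add: algebra_simps)
  have "c2 * ((y - 1) * (y - x)) = c1 * (x\<^sup>2 - 1) + c2 * (y\<^sup>2 - 1) - (x + 1) * (c1 * (x - 1) + c2 * (y - 1))"
    by (simp add: algebra_simps power2_eq_square)
  then have c2: "c2 = 0"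
    using f1 f2 y1 xy by simp
  then have "c1 = 0"
    using f1 x1 by simp
  then show ?thesis
    using c2 e1 by simp
qed

context boussinesq_symmetry
begin

text \<open>Coefficients of the invariance condition on \<^const>\<open>probe2\<close>, viewed as a polynomial in the
  free jet values \<open>v, v\<^sub>x\<^sub>x, v\<^sub>x\<^sub>x\<^sub>x, v\<^sub>x\<^sub>x\<^sub>x\<^sub>x, v\<^sub>y\<^sub>y\<close> for fixed \<open>v\<^sub>x = a\<close>.\<close>

definition "uxx_factor a = 1 + (p + 1) * a powr p"

definition "coeff_1 a z = Dlist [et,et] \<beta> z
   - uxx_factor a * (Dlist [ex,ex] \<beta> z + 2 * Dlist [ex] \<alpha> z * a - Dlist [ex,ex] \<xi>x3 z * a)
   - e * (Dlist [ex,ex,ex,ex] \<beta> z + 4 * Dlist [ex,ex,ex] \<alpha> z * a - Dlist [ex,ex,ex,ex] \<xi>x3 z * a)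
   - s2 * Dlist [ey,ey] \<beta> z"
definition "coeff_v a z = Dlist [et,et] \<alpha> z - uxx_factor a * Dlist [ex,ex] \<alpha> z
   - e * Dlist [ex,ex,ex,ex] \<alpha> z - s2 * Dlist [ey,ey] \<alpha> z"
definition "coeff_vxx a z = - uxx_factor a * (\<alpha> z - 2 * Dlist [ex] \<xi>x3 z)
   - (p + 1) * p * a powr (p - 1) * (Dlist [ex] \<beta> z + (\<alpha> z - Dlist [ex] \<xi>x3 z) * a)
   - e * (6 * Dlist [ex,ex] \<alpha> z - 4 * Dlist [ex,ex,ex] \<xi>x3 z) + uxx_factor a * (\<alpha> z - 2 * Dlist [et] \<tau>3 z)"
definition "coeff_v_vxx a z = - (p + 1) * p * a powr (p - 1) * Dlist [ex] \<alpha> z"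
definition "coeff_vxxx z = - e * (4 * Dlist [ex] \<alpha> z - 6 * Dlist [ex,ex] \<xi>x3 z)"
definition "coeff_vxxxx z = - e * (\<alpha> z - 4 * Dlist [ex] \<xi>x3 z) + e * (\<alpha> z - 2 * Dlist [et] \<tau>3 z)"
definition "coeff_vyy z = - s2 * (\<alpha> z - 2 * Dlist [ey] \<xi>y3 z) + s2 * (\<alpha> z - 2 * Dlist [et] \<tau>3 z)"

lemma probe2_polynomial_eq_0:
  "a > 0 \<Longrightarrow> coeff_1 a z + u0 * coeff_v a z + q * (coeff_vxx a z + u0 * coeff_v_vxx a z)
     + g * coeff_vxxx z + m * coeff_vxxxx z + h * coeff_vyy z = 0"
  using prDelta_reduced_probe2_eq_0[of a z u0 q g m h]
  unfolding prDelta_reduced_probe2 coeff_1_def coeff_v_def coeff_vxx_def coeff_v_vxx_def coeff_vxxx_def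
    coeff_vxxxx_def coeff_vyy_def uxx_factor_def
  by (simp add: algebra_simps)

lemma probe2_coefficients_eq_0:
  assumes "a > 0"
  shows "coeff_1 a z = 0" "coeff_vxxxx z = 0" "coeff_vyy z = 0" "coeff_vxxx z = 0" "coeff_vxx a z = 0"
    "coeff_v_vxx a z = 0"
proof -
  note eq = probe2_polynomial_eq_0[OF assms, of z]
  show c1: "coeff_1 a z = 0"
    using eq[of 0 0 0 0 0] by simp
  show "coeff_vxxxx z = 0" "coeff_vyy z = 0" "coeff_vxxx z = 0"
    using eq[of 0 0 0 1 0] eq[of 0 0 0 0 1] eq[of 0 0 1 0 0] c1 by simp_all
  show cq: "coeff_vxx a z = 0"
    using eq[of 0 1 0 0 0] c1 by simp
  have "coeff_v a z = 0"
    using eq[of 1 0 0 0 0] c1 by simp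
  then show "coeff_v_vxx a z = 0"
    using eq[of 1 1 0 0 0] c1 cq by simp
qed

lemma tau3_t_eq: "Dlist [et] \<tau>3 z = 2 * Dlist [ex] \<xi>x3 z"
  using probe2_coefficients_eq_0(2)[of 1 z] e_nonzero unfolding coeff_vxxxx_def by (simp add: algebra_simps)

lemma xiy3_y_eq: "Dlist [ey] \<xi>y3 z = Dlist [et] \<tau>3 z"
  using probe2_coefficients_eq_0(3)[of 1 z] s2_nonzero unfolding coeff_vyy_def by (simp add: algebra_simps)

lemma alpha_x_eq_0: "Dlist [ex] \<alpha> z = 0"
  using probe2_coefficients_eq_0(6)[of 1 z] p_nonzero p_neq_minus_1 unfolding coeff_v_vxx_def by simp

lemma xix3_xx_eq_0: "Dlist [ex, ex] \<xi>x3 z = 0"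
  using probe2_coefficients_eq_0(4)[of 1 z] e_nonzero alpha_x_eq_0[of z] unfolding coeff_vxxx_def by simp

lemma higher_x_derivatives_eq_0:
  "Dlist [ex, ex] \<alpha> z = 0" "Dlist [ex, ex, ex] \<alpha> z = 0" "Dlist [ex, ex, ex] \<xi>x3 z = 0"
  "Dlist [ex, ex, ex, ex] \<xi>x3 z = 0"
proof -
  have "Dlist [ex] \<alpha> = (\<lambda>z. 0)" "Dlist [ex, ex] \<xi>x3 = (\<lambda>z. 0)"
    using alpha_x_eq_0 xix3_xx_eq_0 by auto
  then show "Dlist [ex, ex] \<alpha> z = 0" "Dlist [ex, ex, ex] \<alpha> z = 0" "Dlist [ex, ex, ex] \<xi>x3 z = 0"
    "Dlist [ex, ex, ex, ex] \<xi>x3 z = 0"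
    using Dlist_append[of "[ex]" "[ex]" \<alpha>] Dlist_append[of "[ex, ex]" "[ex]" \<alpha>]
      Dlist_append[of "[ex]" "[ex, ex]" \<xi>x3] Dlist_append[of "[ex, ex]" "[ex, ex]" \<xi>x3]
    by simp_all
qed

text \<open>The coefficient of \<open>v\<^sub>x\<^sub>x\<close> is a combination of the powers \<open>a\<^sup>0, a\<^sup>p\<^sup>-\<^sup>1, a\<^sup>p\<close> of
  \<open>a = v\<^sub>x\<close>; these are independent exactly when \<open>p \<noteq> 1\<close>.\<close>

lemma coeff_vxx_powr_form:
  assumes "a > 0"
  shows "- 2 * Dlist [ex] \<xi>x3 z + (- (p + 1) * p * Dlist [ex] \<beta> z) * a powr (p - 1)
    + (- (p + 1) * 2 * Dlist [ex] \<xi>x3 z - (p + 1) * p * (\<alpha> z - Dlist [ex] \<xi>x3 z)) * a powr p = 0"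
proof -
  have ap: "a powr (p - 1) * a = a powr p"
    using assms by (simp add: powr_diff field_simps)
  have "- uxx_factor a * (\<alpha> z - 2 * Dlist [ex] \<xi>x3 z)
          - (p + 1) * p * a powr (p - 1) * (Dlist [ex] \<beta> z + (\<alpha> z - Dlist [ex] \<xi>x3 z) * a)
          + uxx_factor a * (\<alpha> z - 4 * Dlist [ex] \<xi>x3 z) = 0"
    using probe2_coefficients_eq_0(5)[OF assms, of z] higher_x_derivatives_eq_0 tau3_t_eq[of z]
    unfolding coeff_vxx_def by simp
  then have "- 2 * Dlist [ex] \<xi>x3 z * uxx_factor a - (p + 1) * p * Dlist [ex] \<beta> z * a powr (p - 1)
     - (p + 1) * p * (\<alpha> z - Dlist [ex] \<xi>x3 z) * (a powr (p - 1) * a) = 0"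
    by (simp add: algebra_simps)
  then show ?thesis
    unfolding ap uxx_factor_def by (simp add: algebra_simps)
qed

lemma beta_equation: "Dlist [et, et] \<beta> z - (2 + p) * Dlist [ex, ex] \<beta> z - e * Dlist [ex, ex, ex, ex] \<beta> z
     - s2 * Dlist [ey, ey] \<beta> z = 0"
  using probe2_coefficients_eq_0(1)[of 1 z] higher_x_derivatives_eq_0 xix3_xx_eq_0[of z] alpha_x_eq_0[of z]
  unfolding coeff_1_def uxx_factor_def by (simp add: algebra_simps)

lemma coefficients_p_neq_1:
  assumes "p \<noteq> 1"
  shows "Dlist [ex] \<xi>x3 z = 0" "Dlist [ex] \<beta> z = 0" "\<alpha> z = 0"
proof -
  have "- 2 * Dlist [ex] \<xi>x3 z = 0 \<and> - (p + 1) * p * Dlist [ex] \<beta> z = 0 \<and>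
        - (p + 1) * 2 * Dlist [ex] \<xi>x3 z - (p + 1) * p * (\<alpha> z - Dlist [ex] \<xi>x3 z) = 0"
    by (rule powr_combination_eq_0_imp[of "p - 1" p]) (use assms p_nonzero coeff_vxx_powr_form in auto)
  then show "Dlist [ex] \<xi>x3 z = 0" "Dlist [ex] \<beta> z = 0" "\<alpha> z = 0"
    using p_nonzero p_neq_minus_1 by auto
qed

lemma coefficients_p_eq_1:
  assumes "p = 1"
  shows "\<alpha> z = - Dlist [ex] \<xi>x3 z" "Dlist [ex] \<beta> z = - Dlist [ex] \<xi>x3 z"
proof -
  have "- 2 * Dlist [ex] \<xi>x3 z + (- 2 * Dlist [ex] \<beta> z)
      + (- 4 * Dlist [ex] \<xi>x3 z - 2 * (\<alpha> z - Dlist [ex] \<xi>x3 z)) * a = 0" if "a > 0" for a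
    using coeff_vxx_powr_form[OF that, of z] that assms by simp
  from this[of 1] this[of 2] show "\<alpha> z = - Dlist [ex] \<xi>x3 z" "Dlist [ex] \<beta> z = - Dlist [ex] \<xi>x3 z"
    by (simp_all add: algebra_simps)
qed

end

section \<open>Solving the determining equations\<close>

lemma R3_decompose:
  "((x, y, t)::R3) = (0, y, t) + x *\<^sub>R ex" "((0, y, t)::R3) = (0, 0, t) + y *\<^sub>R ey"
  "((0, 0, t)::R3) = 0 + t *\<^sub>R et"
  by (simp_all add: ex_def ey_def et_def)

lemma shift_if_pdir_const:
  assumes F: "smooth_dirs F" and k: "pdir d F = (\<lambda>z. k)"
  shows "F (w + s *\<^sub>R d) = F w + s * k"
proof -
  have "F (w + s *\<^sub>R d) = F w + s * pdir d F w"
    by (rule affine_along_direction) (use F smooth_dirs_differentiable smooth_dirs_pdir_differentiable k in auto)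
  then show ?thesis
    using k by simp
qed

lemma affine_if_pdirs_const:
  fixes F :: "R3 \<Rightarrow> real"
  assumes F: "smooth_dirs F" and "pdir ex F = (\<lambda>z. kx)" "pdir ey F = (\<lambda>z. ky)" "pdir et F = (\<lambda>z. kt)"
  shows "F (x, y, t) = F 0 + kx * x + ky * y + kt * t"
proof -
  have "F (x, y, t) = F (0, y, t) + x * kx"
    by (subst R3_decompose(1)) (rule shift_if_pdir_const[OF F assms(2)])
  also have "F (0, y, t) = F (0, 0, t) + y * ky"
    by (subst R3_decompose(2)) (rule shift_if_pdir_const[OF F assms(3)])
  also have "F (0, 0, t) = F 0 + t * kt"
    by (subst R3_decompose(3)) (rule shift_if_pdir_const[OF F assms(4)])
  finally show ?thesis
    by (simp add: algebra_simps)
qed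

lemma affine_in_x_if_pdir_const:
  fixes F :: "R3 \<Rightarrow> real"
  assumes "smooth_dirs F" and "pdir ex F = (\<lambda>z. kx)"
  shows "F (x, y, t) = F (0, y, t) + kx * x"
  by (subst R3_decompose(1)) (simp add: shift_if_pdir_const[OF assms] mult.commute)

lemma constant_if_translation_invariant:
  fixes G :: "R3 \<Rightarrow> real"
  assumes "\<And>z s. G (z + s *\<^sub>R ex) = G z" "\<And>z s. G (z + s *\<^sub>R ey) = G z" "\<And>z s. G (z + s *\<^sub>R et) = G z"
  shows "G z = G 0"
proof -
  obtain x y t where z: "z = (x, y, t)"
    by (cases z) auto
  have "G (x, y, t) = G (0, y, t)"
    by (subst R3_decompose(1)) (rule assms(1))
  also have "\<dots> = G (0, 0, t)"
    by (subst R3_decompose(2)) (rule assms(2))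
  also have "\<dots> = G 0"
    by (subst R3_decompose(3)) (rule assms(3))
  finally show ?thesis
    using z by simp
qed

definition yt_plane :: "real \<times> real \<Rightarrow> R3" where "yt_plane yt = (0, fst yt, snd yt)"

lemma linear_yt_plane: "linear yt_plane"
  by (rule linearI) (auto simp: yt_plane_def)

lemma yt_plane_basis: "yt_plane (0, 1) = et" "yt_plane (1, 0) = ey"
  by (simp_all add: yt_plane_def et_def ey_def)

abbreviation generators :: "real \<Rightarrow> real \<Rightarrow> real \<Rightarrow> real \<Rightarrow> real \<Rightarrow> (real \<times> real \<Rightarrow> real) \<Rightarrow> real \<Rightarrow> vf" where
  "generators s2 c1 c2 c3 c4 P c5 \<equiv> vadd (vscale c1 gen1) (vadd (vscale c2 gen2) (vadd (vscale c3 gen3)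
     (vadd (vscale c4 (gen4 s2)) (vadd (gen5 P) (vscale c5 gen_scal)))))"

context boussinesq_symmetry
begin

definition "scal = pdir ex \<xi>x3 0"
definition "boost = pdir et \<xi>y3 0"
definition "wave_part = (\<lambda>yt. \<beta> (yt_plane yt))"

lemma xix3_pdir_x: "pdir ex \<xi>x3 = (\<lambda>z. scal)"
proof -
  have smooth_xix3_x: "smooth_dirs (pdir ex \<xi>x3)"
    using smooth_reduced(1) by (rule smooth_dirs_pdir)
  have "pdir ex \<xi>x3 z = pdir ex \<xi>x3 0" for z
  proof (rule constant_if_translation_invariant)
    show "pdir ex \<xi>x3 (z + s *\<^sub>R ex) = pdir ex \<xi>x3 z" for z s
      using shift_if_pdir_const[OF smooth_xix3_x, of ex 0] xix3_xx_eq_0 by (simp add: fun_eq_iff)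
    show "pdir ex \<xi>x3 (z + s *\<^sub>R ey) = pdir ex \<xi>x3 z" "pdir ex \<xi>x3 (z + s *\<^sub>R et) = pdir ex \<xi>x3 z" for z s
      using shift_if_pdir_const[OF smooth_reduced(1) reduced_independence(1)]
        shift_if_pdir_const[OF smooth_reduced(1) reduced_independence(2)]
      by (simp_all add: pdir_translation_invariant)
  qed
  then show ?thesis
    by (auto simp: scal_def)
qed

lemma tau3_pdir_t: "pdir et \<tau>3 = (\<lambda>z. 2 * scal)"
  using tau3_t_eq xix3_pdir_x by (auto simp: fun_eq_iff)

lemma xiy3_pdir_y: "pdir ey \<xi>y3 = (\<lambda>z. 2 * scal)"
  using xiy3_y_eq tau3_pdir_t by (auto simp: fun_eq_iff)

lemma xiy3_pdir_t: "pdir et \<xi>y3 = (\<lambda>z. boost)"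
proof -
  have "pdir et \<xi>y3 z = pdir et \<xi>y3 0" for z
  proof (rule constant_if_translation_invariant)
    show "pdir et \<xi>y3 (z + s *\<^sub>R ex) = pdir et \<xi>y3 z" for z s
      using shift_if_pdir_const[OF smooth_reduced(2) reduced_independence(3)]
      by (simp add: pdir_translation_invariant)
    show "pdir et \<xi>y3 (z + s *\<^sub>R ey) = pdir et \<xi>y3 z" for z s
      by (rule pdir_shift_invariant) (rule shift_if_pdir_const[OF smooth_reduced(2) xiy3_pdir_y])
    have "pdir ey \<tau>3 (z + s *\<^sub>R et) = pdir ey \<tau>3 z" for z s
      by (rule pdir_shift_invariant) (rule shift_if_pdir_const[OF smooth_reduced(3) tau3_pdir_t])
    then show "pdir et \<xi>y3 (z + s *\<^sub>R et) = pdir et \<xi>y3 z" for z s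
      by (simp add: xiy3_t_eq_tau3_y)
  qed
  then show ?thesis
    by (auto simp: boost_def)
qed

lemma tau3_pdir_y: "pdir ey \<tau>3 = (\<lambda>z. s2 * boost)"
proof -
  have "s2 * boost = (s2 * s2) * pdir ey \<tau>3 z" for z
    using xiy3_t_eq_tau3_y[of z] xiy3_pdir_t by simp
  then show ?thesis
    using s2_square by auto
qed

lemma alpha_eq: "\<alpha> z = - scal"
  using coefficients_p_neq_1(1,3) coefficients_p_eq_1(1) xix3_pdir_x by (cases "p = 1") auto

lemma beta_pdir_x: "pdir ex \<beta> = (\<lambda>z. - scal)"
  using coefficients_p_neq_1(1,2) coefficients_p_eq_1(2) xix3_pdir_x by (cases "p = 1") (auto simp: fun_eq_iff)

lemma scal_eq_0_if_p_neq_1: "p \<noteq> 1 \<Longrightarrow> scal = 0"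
  using coefficients_p_neq_1(1)[of 0] by (simp add: scal_def)

lemma reduced_explicit:
  "\<xi>x3 (x, y, t) = \<xi>x3 0 + scal * x"
  "\<xi>y3 (x, y, t) = \<xi>y3 0 + 2 * scal * y + boost * t"
  "\<tau>3 (x, y, t) = \<tau>3 0 + s2 * boost * y + 2 * scal * t"
  "\<beta> (x, y, t) = wave_part (y, t) - scal * x"
  using affine_if_pdirs_const[OF smooth_reduced(1) xix3_pdir_x reduced_independence(1,2)]
    affine_if_pdirs_const[OF smooth_reduced(2) reduced_independence(3) xiy3_pdir_y xiy3_pdir_t]
    affine_if_pdirs_const[OF smooth_reduced(3) reduced_independence(4) tau3_pdir_y tau3_pdir_t]
    affine_in_x_if_pdir_const[OF smooth_reduced(5) beta_pdir_x]
  by (simp_all add: wave_part_def yt_plane_def algebra_simps)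

lemma wave_sol_wave_part: "wave_sol s2 wave_part"
proof -
  have "smooth_dirs wave_part"
    unfolding wave_part_def by (rule smooth_dirs_compose_linear[OF linear_yt_plane smooth_reduced(5)])
  moreover have "Dlist [ex, ex] \<beta> z = 0" "Dlist [ex, ex, ex, ex] \<beta> z = 0" for z
    using beta_pdir_x by simp_all
  then have "Dlist [(0, 1), (0, 1)] wave_part z - s2 * Dlist [(1, 0), (1, 0)] wave_part z = 0" for z
    unfolding wave_part_def Dlist_compose_linear[OF linear_yt_plane]
    using beta_equation[of "yt_plane z"] by (simp add: yt_plane_basis)
  ultimately show ?thesis
    unfolding wave_sol_def smooth_dirs_iff_smoothC by blast
qed

lemma X_eq_generators: "X = generators s2 (\<xi>x3 0) (\<xi>y3 0) (\<tau>3 0) (s2 * boost) wave_part scal"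
proof -
  have explicit: "\<xi>x3 (pr3 w) = \<xi>x3 0 + scal * fst w"
    "\<xi>y3 (pr3 w) = \<xi>y3 0 + 2 * scal * fst (snd w) + boost * fst (snd (snd w))"
    "\<tau>3 (pr3 w) = \<tau>3 0 + s2 * boost * fst (snd w) + 2 * scal * fst (snd (snd w))"
    "\<beta> (pr3 w) = wave_part (fst (snd w), fst (snd (snd w))) - scal * fst w" for w
    using reduced_explicit[of "fst w" "fst (snd w)" "fst (snd (snd w))"] by (simp_all add: pr3_def)
  show ?thesis
    apply (subst X_reduced)
    apply (simp add: reduced_vf_def vadd_def vscale_def gen1_def gen2_def gen3_def gen4_def gen5_def gen_scal_def
        xiX_def xiY_def tauT_def etaV_def explicit alpha_eq vcoord_def fun_eq_iff split: prod.splits)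
    apply (simp add: algebra_simps s2_square)
    done
qed

end

section \<open>The generators are symmetries\<close>

definition yt_proj :: "R3 \<Rightarrow> real \<times> real" where "yt_proj z = (fst (snd z), snd (snd z))"

lemma linear_yt_proj: "linear yt_proj"
  by (rule linearI) (auto simp: yt_proj_def)

context
  fixes c1 c2 c3 c4 c5 s2 :: real and P :: "real \<times> real \<Rightarrow> real"
begin

definition "comb_xix = (\<lambda>z::R3. c1 + c5 * fst z)"
definition "comb_xiy = (\<lambda>z::R3. c2 + c4 * s2 * snd (snd z) + 2 * c5 * fst (snd z))"
definition "comb_tau = (\<lambda>z::R3. c3 + c4 * fst (snd z) + 2 * c5 * snd (snd z))"
definition "comb_alpha = (\<lambda>z::R3. - c5)"
definition "comb_beta = (\<lambda>z::R3. P (yt_proj z) - c5 * fst z)"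

lemma generators_reduced: "generators s2 c1 c2 c3 c4 P c5 = reduced_vf comb_xix comb_xiy comb_tau comb_alpha comb_beta"
  by (simp add: reduced_vf_def vadd_def vscale_def gen1_def gen2_def gen3_def gen4_def gen5_def gen_scal_def
      xiX_def xiY_def tauT_def etaV_def comb_xix_def comb_xiy_def comb_tau_def comb_alpha_def comb_beta_def
      yt_proj_def pr3_def vcoord_def fun_eq_iff split: prod.splits)
    (simp add: algebra_simps)

lemma smooth_comb:
  assumes "smooth_dirs P"
  shows "smooth_dirs comb_xix" "smooth_dirs comb_xiy" "smooth_dirs comb_tau" "smooth_dirs comb_alpha"
    "smooth_dirs comb_beta"
proof -
  have "comb_xix \<in> polyfun" "comb_xiy \<in> polyfun" "comb_tau \<in> polyfun"
    unfolding comb_xix_def comb_xiy_def comb_tau_def by (intro polyfun_R3_intros)+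
  then show "smooth_dirs comb_xix" "smooth_dirs comb_xiy" "smooth_dirs comb_tau"
    using polyfun_smooth_dirs by blast+
  show "smooth_dirs comb_alpha"
    unfolding comb_alpha_def by (rule smooth_dirs_const)
  have "smooth_dirs (\<lambda>z::R3. P (yt_proj z) + (- c5) * fst z)"
    by (intro smooth_dirs_add smooth_dirs_compose_linear[OF linear_yt_proj assms] polyfun_smooth_dirs
        polyfun_R3_intros)
  then show "smooth_dirs comb_beta"
    by (simp add: comb_beta_def)
qed

lemma slice_comb:
  "slice ex comb_xix z = (\<lambda>s. c1 + c5 * fst z + c5 * s)" "slice ey comb_xix z = (\<lambda>s. c1 + c5 * fst z)"
  "slice et comb_xix z = (\<lambda>s. c1 + c5 * fst z)"
  "slice ex comb_xiy z = (\<lambda>s. comb_xiy z)" "slice ey comb_xiy z = (\<lambda>s. comb_xiy z + 2 * c5 * s)"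
  "slice et comb_xiy z = (\<lambda>s. comb_xiy z + c4 * s2 * s)"
  "slice ex comb_tau z = (\<lambda>s. comb_tau z)" "slice ey comb_tau z = (\<lambda>s. comb_tau z + c4 * s)"
  "slice et comb_tau z = (\<lambda>s. comb_tau z + 2 * c5 * s)"
  "slice ex comb_beta z = (\<lambda>s. P (yt_proj z) - c5 * fst z - c5 * s)"
  "slice ey comb_beta z = (\<lambda>s. slice (1, 0) P (yt_proj z) s - c5 * fst z)"
  "slice et comb_beta z = (\<lambda>s. slice (0, 1) P (yt_proj z) s - c5 * fst z)"
  by (auto simp: slice_def comb_xix_def comb_xiy_def comb_tau_def comb_beta_def ex_def ey_def et_def
      yt_proj_def algebra_simps zero_prod_def[symmetric])

lemma comb_independence:
  "pdir ey comb_xix = (\<lambda>z. 0)" "pdir et comb_xix = (\<lambda>z. 0)" "pdir ex comb_xiy = (\<lambda>z. 0)" "pdir ex comb_tau = (\<lambda>z. 0)"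
  using Dlist_eq_nderiv_slice(1)[of ey comb_xix] Dlist_eq_nderiv_slice(1)[of et comb_xix]
    Dlist_eq_nderiv_slice(1)[of ex comb_xiy] Dlist_eq_nderiv_slice(1)[of ex comb_tau]
  by (simp_all add: slice_comb fun_eq_iff del: nderiv_slice_eq_pdirn)

lemma Dlist_comb_alpha: "Dlist (d # ds) comb_alpha z = 0"
proof -
  have "Dlist ds comb_alpha = (\<lambda>z. if ds = [] then - c5 else 0)" for ds
    unfolding comb_alpha_def by (induction ds) simp_all
  then show ?thesis
    by simp
qed

lemma comb_jet:
  assumes "smooth_dirs P"
  shows "Dlist [ex] comb_xix z = c5" "Dlist [ex, ex] comb_xix z = 0" "Dlist [ex, ex, ex] comb_xix z = 0"
    "Dlist [ex, ex, ex, ex] comb_xix z = 0"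
    "Dlist [et] comb_xiy z = c4 * s2" "Dlist [et, et] comb_xiy z = 0" "Dlist [ey] comb_xiy z = 2 * c5"
    "Dlist [ey, ey] comb_xiy z = 0"
    "Dlist [et] comb_tau z = 2 * c5" "Dlist [et, et] comb_tau z = 0" "Dlist [ey] comb_tau z = c4"
    "Dlist [ey, ey] comb_tau z = 0"
    "Dlist [ex] comb_beta z = - c5" "Dlist [ex, ex] comb_beta z = 0" "Dlist [ex, ex, ex, ex] comb_beta z = 0"
    "Dlist [et, et] comb_beta z = Dlist [(0, 1), (0, 1)] P (yt_proj z)"
    "Dlist [ey, ey] comb_beta z = Dlist [(1, 0), (1, 0)] P (yt_proj z)"
  by (simp_all only: Dlist_eq_nderiv_slice slice_comb) (simp_all add: assms del: nderiv_slice_eq_pdirn)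

lemma generators_symmetry:
  assumes P: "wave_sol s2 P" and "p = 1 \<or> c5 = 0"
  shows "is_point_symmetry p s2 e (generators s2 c1 c2 c3 c4 P c5)"
  unfolding is_point_symmetry_def
proof (intro allI impI)
  fix u z
  assume u: "smoothC u" and ux: "Dlist [ex] u z > 0" and Delta: "Delta p s2 e u z = 0"
  have P_smooth: "smooth_dirs P"
    using P unfolding wave_sol_def smooth_dirs_iff_smoothC by blast
  have wave: "Dlist [(0, 1), (0, 1)] P (yt_proj z) = s2 * Dlist [(1, 0), (1, 0)] P (yt_proj z)"
    using P unfolding wave_sol_def by (metis eq_iff_diff_eq_0)
  have u_smooth: "smooth_dirs u"
    using u smooth_dirs_iff_smoothC by blast
  have "prDelta p s2 e (generators s2 c1 c2 c3 c4 P c5) u z = prDelta_reduced p s2 e comb_xix comb_xiy comb_tau comb_alpha comb_beta u z"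
    unfolding generators_reduced using smooth_comb[OF P_smooth] u_smooth by (intro prDelta_reduced_vf comb_independence)
  also have "\<dots> = c5 * Dlist [ex, ex] u z *
      (- 2 * (1 + (p + 1) * Dlist [ex] u z powr p) + (p + 1) * p * Dlist [ex] u z powr (p - 1) * (1 + 2 * Dlist [ex] u z))"
  proof -
    have "Dlist [et, ey] u z = Dlist [ey, et] u z"
      using pdir_commute[OF u_smooth, of ey et z] by simp
    moreover have "Dlist [et, et] u z = Dlist [ex, ex] u z + (p + 1) * Dlist [ex] u z powr p * Dlist [ex, ex] u z
      + e * Dlist [ex, ex, ex, ex] u z + s2 * Dlist [ey, ey] u z"
      using Delta unfolding Delta_def by (simp only: algebra_simps)
    ultimately show ?thesis
      unfolding prDelta_reduced_def Let_def
      by (simp only: comb_jet[OF P_smooth] Dlist_comb_alpha wave) (simp add: comb_alpha_def algebra_simps)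
  qed
  also have "\<dots> = 0"
    using assms(2) ux by (auto simp: algebra_simps)
  finally show "prDelta p s2 e (generators s2 c1 c2 c3 c4 P c5) u z = 0" .
qed

end

lemma gen5_add_zero_scal: "vadd (gen5 P) (vscale 0 gen_scal) = gen5 P"
  by (simp add: vadd_def vscale_def gen5_def gen_scal_def xiX_def xiY_def tauT_def etaV_def fun_eq_iff
      split: prod.splits)

lemma (in boussinesq_symmetry) symmetry_eq_generators:
  "\<exists>c1 c2 c3 c4 c5 P. wave_sol s2 P \<and> X = generators s2 c1 c2 c3 c4 P c5 \<and> (p \<noteq> 1 \<longrightarrow> c5 = 0)"
  using X_eq_generators wave_sol_wave_part scal_eq_0_if_p_neq_1 by blast

theorem theorem3p2:
  fixes p s2 e :: real
  assumes "p \<noteq> 0" and "p \<noteq> -1" and "s2 \<in> {1, -1}" and "e \<in> {1, -1}"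
  shows "(p \<noteq> 1 \<longrightarrow> (\<forall>X. smooth_vf X \<longrightarrow>
            (is_point_symmetry p s2 e X \<longleftrightarrow>
              (\<exists>c1 c2 c3 c4 P. wave_sol s2 P \<and>
                 X = vadd (vscale c1 gen1) (vadd (vscale c2 gen2) (vadd (vscale c3 gen3)
                       (vadd (vscale c4 (gen4 s2)) (gen5 P))))))))
       \<and> (p = 1 \<longrightarrow> (\<forall>X. smooth_vf X \<longrightarrow>
            (is_point_symmetry p s2 e X \<longleftrightarrow>
              (\<exists>c1 c2 c3 c4 c5 P. wave_sol s2 P \<and>
                 X = vadd (vscale c1 gen1) (vadd (vscale c2 gen2) (vadd (vscale c3 gen3)
                       (vadd (vscale c4 (gen4 s2)) (vadd (gen5 P) (vscale c5 gen_scal)))))))))"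
proof -
  have forward: "\<exists>c1 c2 c3 c4 c5 P. wave_sol s2 P \<and> X = generators s2 c1 c2 c3 c4 P c5 \<and> (p \<noteq> 1 \<longrightarrow> c5 = 0)"
    if "smooth_vf X" "is_point_symmetry p s2 e X" for X
  proof -
    interpret boussinesq_symmetry p s2 e X
      using assms that by unfold_locales auto
    show ?thesis
      by (rule symmetry_eq_generators)
  qed
  have backward: "is_point_symmetry p s2 e (generators s2 c1 c2 c3 c4 P c5)"
    if "wave_sol s2 P" "p = 1 \<or> c5 = 0" for c1 c2 c3 c4 c5 P
    using generators_symmetry that by blast
  have backward_p_neq_1: "is_point_symmetry p s2 e (vadd (vscale c1 gen1) (vadd (vscale c2 gen2)
      (vadd (vscale c3 gen3) (vadd (vscale c4 (gen4 s2)) (gen5 P)))))" if "wave_sol s2 P" for c1 c2 c3 c4 P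
    using backward[OF that] gen5_add_zero_scal by metis
  show ?thesis
    by (intro conjI impI allI iffI)
      (metis forward gen5_add_zero_scal, use backward_p_neq_1 in blast, use forward in blast, use backward in blast)
qed

end
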